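(* Let $F_0=\{x\in\Omega\cap\partial E:\ \limsup_{r\to0^+}\mu(B(x,r))/r^n=0\}$. Then either $\mathcal{H}(F_0)=0$ or $\mathcal{H}^{n-1}_{Euc}(F_0)=\infty$. Furthermore, for $\varepsilon>0$ and \[ K_\varepsilon=\Big\{x\in\Omega\cap\partial E:\ \limsup_{r\to0^+}\frac{\mu(B(x,r))}{r^n}<\varepsilon\Big\}, \] one has $\mathcal{H}(K_\varepsilon)\le C\,\varepsilon^{(n-1)/n}\,\mathcal{H}^{n-1}_{Euc}(K_\varepsilon)$ with $C$ independent of $\varepsilon$.
   Context: Let $n\ge2$ and let $\omega$ be a strong $A_\infty$-weight on $\mathbb{R}^n$: $\omega\ge0$ locally integrable, $d\mu=\omega\,d\mathcal{L}^n$ doubling with respect to Euclidean balls, and there are a metric $d$ and $C\ge1$ with $C^{-1}\mu(B_{x,y})^{1/n}\le d(x,y)\le C\mu(B_{x,y})^{1/n}$, $B_{x,y}$ the smallest Euclidean ball containing $x,y$. $B(x,r)$ denotes a Euclidean ball, $B^d(x,r)$ a $d$-ball. $\mathcal{H}$ is the codimension-one Hausdorff measure in $(\mathbb{R}^n,d,\mu)$: $\mathcal{H}(A)=\lim_{\delta\to0}\inf\{\sum_i\mu(B^d(x_i,r_i))/r_i:\ A\subset\bigcup_iB^d(x_i,r_i),\ r_i<\delta\}$; $\mathcal{H}^{n-1}_{Euc}$ is the $(n-1)$-dimensional Euclidean Hausdorff measure. Perimeter $P(E,A)$ is taken in $(\mathbb{R}^n,d,\mu)$ (total variation of $\chi_E$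 defined via $d$-upper gradients). A Borel set $E$ of finite perimeter is a $K$-quasiminimal set in open $\Omega$ if for all open $U\Subset\Omega$ and Borel $F,G\Subset U$, $P(E,U)\le KP((E\cup F)\setminus G,U)$. Standing hypothesis: $E\subset\Omega$ is such a $K$-quasiminimal set with $P(E,\Omega)<\infty$, normalized so that $E=\mathrm{int}(\overline E)$ and $\mu(B(x,r)\cap E)>0$, $\mu(B(x,r)\setminus E)>0$ for all $x\in\partial E$, $r>0$. *)

theory Defs
  imports "HOL-Analysis.Analysis"
begin

definition wmeasure :: "('a::euclidean_space \<Rightarrow> real) \<Rightarrow> 'a measure" where
  "wmeasure \<omega> = density lebesgue (\<lambda>x. ennreal (\<omega> x))"

abbreviation wmu :: "('a::euclidean_space \<Rightarrow> real) \<Rightarrow> 'a set \<Rightarrow> ennreal" where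
  "wmu \<omega> A \<equiv> emeasure (wmeasure \<omega>) A"

definition Bxy :: "'a::euclidean_space \<Rightarrow> 'a \<Rightarrow> 'a set" where
  "Bxy x y = cball (midpoint x y) (dist x y / 2)"

definition is_metric :: "('a \<Rightarrow> 'a \<Rightarrow> real) \<Rightarrow> bool" where
  "is_metric d \<longleftrightarrow> (\<forall>x y. d x y = 0 \<longleftrightarrow> x = y) \<and> (\<forall>x y. d x y = d y x)
      \<and> (\<forall>x y z. d x z \<le> d x y + d y z)"

definition strong_Ainf_with :: "('a::euclidean_space \<Rightarrow> real) \<Rightarrow> ('a \<Rightarrow> 'a \<Rightarrow> real) \<Rightarrow> bool" where
  "strong_Ainf_with \<omega> d \<longleftrightarrow>
     (\<forall>x. 0 \<le> \<omega> x) \<and> \<omega> \<in> borel_measurable lebesgue \<and>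
     (\<forall>K. compact K \<longrightarrow> (\<integral>\<^sup>+x\<in>K. ennreal (\<omega> x) \<partial>lebesgue) < \<infinity>) \<and>
     (\<exists>Cd. \<forall>x r. 0 < r \<longrightarrow> wmu \<omega> (ball x (2 * r)) \<le> ennreal Cd * wmu \<omega> (ball x r)) \<and>
     is_metric d \<and>
     (\<exists>C\<ge>1. \<forall>x y.
        enn2real (wmu \<omega> (Bxy x y)) powr (1 / real DIM('a)) / C \<le> d x y \<and>
        d x y \<le> C * enn2real (wmu \<omega> (Bxy x y)) powr (1 / real DIM('a)))"

definition dball :: "('a \<Rightarrow> 'a \<Rightarrow> real) \<Rightarrow> 'a \<Rightarrow> real \<Rightarrow> 'a set" where
  "dball d x r = {y. d x y < r}"

definition codim1_H_delta ::
  "('a::euclidean_space \<Rightarrow> real) \<Rightarrow> ('a \<Rightarrow> 'a \<Rightarrow> real) \<Rightarrow> real \<Rightarrow> 'a set \<Rightarrow> ennreal" where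
  "codim1_H_delta \<omega> d \<delta> A =
     (INF cov \<in> {(I :: nat set, c :: nat \<Rightarrow> 'a, r :: nat \<Rightarrow> real).
                 A \<subseteq> (\<Union>i\<in>I. dball d (c i) (r i)) \<and> (\<forall>i\<in>I. 0 < r i \<and> r i < \<delta>)}.
        (case cov of (I, c, r) \<Rightarrow>
           (\<Sum>i. if i \<in> I then wmu \<omega> (dball d (c i) (r i)) / ennreal (r i) else 0)))"

definition codim1_H :: "('a::euclidean_space \<Rightarrow> real) \<Rightarrow> ('a \<Rightarrow> 'a \<Rightarrow> real) \<Rightarrow> 'a set \<Rightarrow> ennreal" where
  "codim1_H \<omega> d A = (SUP \<delta>\<in>{0<..}. codim1_H_delta \<omega> d \<delta> A)"

definition hausdorff_const :: "real \<Rightarrow> real" where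
  "hausdorff_const s = pi powr (s / 2) / Gamma (s / 2 + 1)"

definition euc_hausdorff_delta :: "real \<Rightarrow> real \<Rightarrow> 'a::euclidean_space set \<Rightarrow> ennreal" where
  "euc_hausdorff_delta s \<delta> A =
     (INF C \<in> {C :: nat \<Rightarrow> 'a set. A \<subseteq> (\<Union>i. C i) \<and> (\<forall>i. bounded (C i) \<and> diameter (C i) < \<delta>)}.
        (\<Sum>i. ennreal (hausdorff_const s * (diameter (C i) / 2) powr s)))"

definition euc_hausdorff :: "real \<Rightarrow> 'a::euclidean_space set \<Rightarrow> ennreal" where
  "euc_hausdorff s A = (SUP \<delta>\<in>{0<..}. euc_hausdorff_delta s \<delta> A)"

text \<open>g is a d-upper gradient of u in the open set U: for every curve in U parametrized
  1-Lipschitz with respect to d (this includes all arc-length parametrized rectifiable curves,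
  and for those the integral below is the line integral).\<close>
definition upper_gradient_in ::
  "('a::euclidean_space \<Rightarrow> 'a \<Rightarrow> real) \<Rightarrow> 'a set \<Rightarrow> ('a \<Rightarrow> real) \<Rightarrow> ('a \<Rightarrow> ennreal) \<Rightarrow> bool" where
  "upper_gradient_in d U u g \<longleftrightarrow> g \<in> borel_measurable borel \<and>
     (\<forall>(L::real) (\<gamma>::real \<Rightarrow> 'a). 0 \<le> L \<longrightarrow> \<gamma> ` {0..L} \<subseteq> U \<longrightarrow>
        (\<forall>s\<in>{0..L}. \<forall>t\<in>{0..L}. d (\<gamma> s) (\<gamma> t) \<le> \<bar>s - t\<bar>) \<longrightarrow>
        ennreal \<bar>u (\<gamma> L) - u (\<gamma> 0)\<bar> \<le> (\<integral>\<^sup>+s\<in>{0..L}. g (\<gamma> s) \<partial>lborel))"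

definition d_loc_lipschitz_on :: "('a \<Rightarrow> 'a \<Rightarrow> real) \<Rightarrow> 'a set \<Rightarrow> ('a \<Rightarrow> real) \<Rightarrow> bool" where
  "d_loc_lipschitz_on d U u \<longleftrightarrow>
     (\<forall>x\<in>U. \<exists>r>0. \<exists>L. \<forall>y\<in>U \<inter> dball d x r. \<forall>z\<in>U \<inter> dball d x r. \<bar>u y - u z\<bar> \<le> L * d y z)"

definition perimeter ::
  "('a::euclidean_space \<Rightarrow> real) \<Rightarrow> ('a \<Rightarrow> 'a \<Rightarrow> real) \<Rightarrow> 'a set \<Rightarrow> 'a set \<Rightarrow> ennreal" where
  "perimeter \<omega> d E U =
     (INF ug \<in> {(u :: nat \<Rightarrow> 'a \<Rightarrow> real, g :: nat \<Rightarrow> 'a \<Rightarrow> ennreal).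
                 (\<forall>i. d_loc_lipschitz_on d U (u i) \<and> upper_gradient_in d U (u i) (g i)) \<and>
                 (\<forall>K. compact K \<and> K \<subseteq> U \<longrightarrow>
                    ((\<lambda>i. \<integral>\<^sup>+x\<in>K. ennreal \<bar>u i x - indicator E x\<bar> \<partial>wmeasure \<omega>) \<longlongrightarrow> 0) sequentially)}.
        (case ug of (u, g) \<Rightarrow> liminf (\<lambda>i. \<integral>\<^sup>+x\<in>U. g i x \<partial>wmeasure \<omega>)))"

definition compactly_contained :: "'a::euclidean_space set \<Rightarrow> 'a set \<Rightarrow> bool" (infix "\<Subset>" 50) where
  "A \<Subset> B \<longleftrightarrow> compact (closure A) \<and> closure A \<subseteq> B"

definition quasiminimal ::
  "('a::euclidean_space \<Rightarrow> real) \<Rightarrow> ('a \<Rightarrow> 'a \<Rightarrow> real) \<Rightarrow> real \<Rightarrow> 'a set \<Rightarrow> 'a set \<Rightarrow> bool" where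
  "quasiminimal \<omega> d K \<Omega> E \<longleftrightarrow> E \<in> sets borel \<and>
     (\<forall>U F G. open U \<and> U \<Subset> \<Omega> \<and> F \<in> sets borel \<and> G \<in> sets borel \<and> F \<Subset> U \<and> G \<Subset> U \<longrightarrow>
        perimeter \<omega> d E U \<le> ennreal K * perimeter \<omega> d ((E \<union> F) - G) U)"

end

theory Submission
  imports Defs
begin

text \<open>
  If at every point of a set \<open>D\<close> the balls of radius \<open>r < \<rho>\<close> have \<open>\<mu>\<close>-measure at most \<open>\<epsilon> r\<^sup>n\<close>,
  then \<open>d(x,y) \<approx> \<mu>(B\<^sub>x\<^sub>,\<^sub>y)\<^sup>1\<^sup>/\<^sup>n\<close> shows that \<open>d\<close> is Lipschitz with constant \<open>\<approx> \<epsilon>\<^sup>1\<^sup>/\<^sup>n\<close> with respect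
  to the Euclidean metric at the points of \<open>D\<close>. A Euclidean cover of \<open>D\<close> by sets of diameter \<open>t\<close>
  thus becomes a cover by \<open>d\<close>-balls of radius \<open>\<approx> \<epsilon>\<^sup>1\<^sup>/\<^sup>n t\<close>, and since \<open>\<mu>\<close> of a \<open>d\<close>-ball of
  radius \<open>s\<close> is \<open>\<lesssim> s\<^sup>n\<close>, each ball costs \<open>\<lesssim> \<epsilon>\<^sup>(\<^sup>n\<^sup>-\<^sup>1\<^sup>)\<^sup>/\<^sup>n t\<^sup>n\<^sup>-\<^sup>1\<close>; hence
  \<open>\<H>(D) \<le> C \<epsilon>\<^sup>(\<^sup>n\<^sup>-\<^sup>1\<^sup>)\<^sup>/\<^sup>n \<H>\<^sup>n\<^sup>-\<^sup>1(D)\<close>. A set on which the upper density is \<open>< \<epsilon>\<close> is the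
  disjoint union of such sets \<open>D\<close>, one for each scale \<open>\<rho> = 1/(m+1)\<close>; they are differences of closed
  sets, and closed sets are Caratheodory measurable for the metric outer measure \<open>\<H>\<^sup>n\<^sup>-\<^sup>1\<close>,
  so the estimates add up. Letting \<open>\<epsilon> \<rightarrow> 0\<close> gives the dichotomy for \<open>F\<^sub>0\<close>.
\<close>

lemma suminf_ennreal_half_powers:
  assumes "0 \<le> e"
  shows "(\<Sum>k. ennreal (e / 2 ^ Suc k)) = ennreal e"
proof -
  have "(\<lambda>k. e / 2 ^ Suc k) sums e"
    using power_half_series[THEN sums_mult, of e] by (simp add: field_simps)
  then show ?thesis
    using assms by (intro suminf_ennreal_eq) auto
qed

lemma ennreal_INF_less_add:
  fixes f :: "'c \<Rightarrow> ennreal"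
  assumes "(INF c\<in>C. f c) < \<infinity>" "0 < e"
  shows "\<exists>c\<in>C. f c < (INF c\<in>C. f c) + ennreal e"
proof -
  have "(INF c\<in>C. f c) + 0 < (INF c\<in>C. f c) + ennreal e"
    unfolding ennreal_add_left_cancel_less using assms by (intro conjI less_imp_neq) simp_all
  then show ?thesis
    unfolding add_0_right INF_less_iff .
qed

lemma INF_covers_countably_subadditive:
  fixes cost :: "'c \<Rightarrow> ennreal" and Cov :: "'a set \<Rightarrow> 'c set" and B :: "nat \<Rightarrow> 'a set"
  assumes merge: "\<And>cs. (\<And>k. cs k \<in> Cov (B k)) \<Longrightarrow>
                    \<exists>c\<in>Cov (\<Union>k. B k). cost c \<le> (\<Sum>k. cost (cs k))"
  shows "(INF c\<in>Cov (\<Union>k. B k). cost c) \<le> (\<Sum>k. INF c\<in>Cov (B k). cost c)"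
proof (rule ennreal_le_epsilon)
  fix e :: real
  assume fin: "(\<Sum>k. INF c\<in>Cov (B k). cost c) < top" and e: "0 < e"
  let ?m = "\<lambda>k. INF c\<in>Cov (B k). cost c"
  have "\<exists>c\<in>Cov (B k). cost c < ?m k + ennreal (e / 2 ^ Suc k)" for k
    using ennreal_suminf_lessD[OF fin] e
    by (intro ennreal_INF_less_add) simp_all
  then obtain cs where cs: "\<And>k. cs k \<in> Cov (B k)"
    and cost_cs: "\<And>k. cost (cs k) < ?m k + ennreal (e / 2 ^ Suc k)"
    by metis
  obtain c where "c \<in> Cov (\<Union>k. B k)" "cost c \<le> (\<Sum>k. cost (cs k))"
    using merge[OF cs] by blast
  then have "(INF c\<in>Cov (\<Union>k. B k). cost c) \<le> (\<Sum>k. cost (cs k))"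
    by (rule INF_lower2)
  also have "\<dots> \<le> (\<Sum>k. ?m k + ennreal (e / 2 ^ Suc k))"
    using cost_cs by (intro suminf_le less_imp_le) auto
  also have "\<dots> = (\<Sum>k. ?m k) + (\<Sum>k. ennreal (e / 2 ^ Suc k))"
    by (rule suminf_add[symmetric]) auto
  also have "(\<Sum>k. ennreal (e / 2 ^ Suc k)) = ennreal e"
    using e by (intro suminf_ennreal_half_powers) simp
  finally show "(INF c\<in>Cov (\<Union>k. B k). cost c) \<le> (\<Sum>k. ?m k) + ennreal e" .
qed

section \<open>The Euclidean Hausdorff measure\<close>

lemma euc_hausdorff_delta_mono:
  "A \<subseteq> B \<Longrightarrow> euc_hausdorff_delta s \<delta> A \<le> euc_hausdorff_delta s \<delta> B"
  unfolding euc_hausdorff_delta_def by (intro INF_superset_mono) auto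

lemma euc_hausdorff_delta_antimono:
  "\<delta>1 \<le> \<delta>2 \<Longrightarrow> euc_hausdorff_delta s \<delta>2 A \<le> euc_hausdorff_delta s \<delta>1 A"
  unfolding euc_hausdorff_delta_def by (intro INF_superset_mono) (auto intro: less_le_trans)

lemma euc_hausdorff_delta_le: "0 < \<delta> \<Longrightarrow> euc_hausdorff_delta s \<delta> A \<le> euc_hausdorff s A"
  unfolding euc_hausdorff_def by (rule SUP_upper) auto

lemma euc_hausdorff_mono: "A \<subseteq> B \<Longrightarrow> euc_hausdorff s A \<le> euc_hausdorff s B"
  unfolding euc_hausdorff_def by (intro SUP_mono) (auto intro: euc_hausdorff_delta_mono)

lemma euc_hausdorff_empty [simp]: "euc_hausdorff s {} = 0"
proof -
  have "euc_hausdorff_delta s \<delta> {} = 0" if "0 < \<delta>" for \<delta>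
    unfolding euc_hausdorff_delta_def using that
    by (intro antisym INF_lower2[of "\<lambda>_. {}"]) auto
  then show ?thesis
    unfolding euc_hausdorff_def by (subst SUP_cong[where D = "\<lambda>_. 0"]) auto
qed

lemma euc_hausdorff_delta_countably_subadditive:
  fixes B :: "nat \<Rightarrow> 'a::euclidean_space set"
  shows "euc_hausdorff_delta s \<delta> (\<Union>k. B k) \<le> (\<Sum>k. euc_hausdorff_delta s \<delta> (B k))"
  unfolding euc_hausdorff_delta_def
proof (rule INF_covers_countably_subadditive
    [where Cov = "\<lambda>A. {C. A \<subseteq> (\<Union>i. C i) \<and> (\<forall>i. bounded (C i) \<and> diameter (C i) < \<delta>)}"
       and cost = "\<lambda>C. \<Sum>i. ennreal (hausdorff_const s * (diameter (C i) / 2) powr s)"])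
  let ?g = "\<lambda>C::'a set. ennreal (hausdorff_const s * (diameter C / 2) powr s)"
  fix Cs :: "nat \<Rightarrow> nat \<Rightarrow> 'a set"
  assume Cs: "\<And>k. Cs k \<in> {C. B k \<subseteq> (\<Union>i. C i) \<and> (\<forall>i. bounded (C i) \<and> diameter (C i) < \<delta>)}"
  define C where "C j = (case prod_decode j of (k, i) \<Rightarrow> Cs k i)" for j
  have "B k \<subseteq> (\<Union>j. C j)" for k
  proof
    fix x assume "x \<in> B k"
    then obtain i where "x \<in> Cs k i"
      using Cs[of k] by auto
    then show "x \<in> (\<Union>j. C j)"
      unfolding C_def by (intro UN_I[of "prod_encode (k, i)"]) auto
  qed
  moreover have "bounded (C j) \<and> diameter (C j) < \<delta>" for j
    using Cs unfolding C_def by (auto split: prod.splits)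
  ultimately have C: "C \<in> {C. (\<Union>k. B k) \<subseteq> (\<Union>i. C i) \<and> (\<forall>i. bounded (C i) \<and> diameter (C i) < \<delta>)}"
    by blast
  have "(\<Sum>j. ?g (C j)) = (\<Sum>j. (\<lambda>(k, i). ?g (Cs k i)) (prod_decode j))"
    unfolding C_def by (simp add: case_prod_unfold)
  also have "\<dots> = (\<Sum>k. \<Sum>i. ?g (Cs k i))"
    by (rule suminf_ennreal_2dimen) simp
  finally have sum_C: "(\<Sum>j. ?g (C j)) = (\<Sum>k. \<Sum>i. ?g (Cs k i))" .
  show "\<exists>C\<in>{C. (\<Union>k. B k) \<subseteq> (\<Union>i. C i) \<and> (\<forall>i. bounded (C i) \<and> diameter (C i) < \<delta>)}.
      (\<Sum>i. ?g (C i)) \<le> (\<Sum>k. \<Sum>i. ?g (Cs k i))"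
  proof (rule bexI[OF _ C])
    show "(\<Sum>i. ?g (C i)) \<le> (\<Sum>k. \<Sum>i. ?g (Cs k i))"
      using sum_C by (rule eq_refl)
  qed
qed

lemma euc_hausdorff_countably_subadditive:
  fixes B :: "nat \<Rightarrow> 'a::euclidean_space set"
  shows "euc_hausdorff s (\<Union>k. B k) \<le> (\<Sum>k. euc_hausdorff s (B k))"
  unfolding euc_hausdorff_def[of s "\<Union>k. B k"]
proof (rule SUP_least)
  fix \<delta> :: real assume "\<delta> \<in> {0<..}"
  then have "(\<Sum>k. euc_hausdorff_delta s \<delta> (B k)) \<le> (\<Sum>k. euc_hausdorff s (B k))"
    by (intro suminf_le euc_hausdorff_delta_le) auto
  then show "euc_hausdorff_delta s \<delta> (\<Union>k. B k) \<le> (\<Sum>k. euc_hausdorff s (B k))"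
    by (rule order_trans[OF euc_hausdorff_delta_countably_subadditive])
qed

lemma euc_hausdorff_delta_separated_add:
  fixes P Q :: "'a::euclidean_space set"
  assumes sep: "\<And>p q. p \<in> P \<Longrightarrow> q \<in> Q \<Longrightarrow> \<delta> \<le> dist p q" and "0 < \<delta>"
  shows "euc_hausdorff_delta s \<delta> P + euc_hausdorff_delta s \<delta> Q \<le> euc_hausdorff_delta s \<delta> (P \<union> Q)"
  unfolding euc_hausdorff_delta_def[of s \<delta> "P \<union> Q"]
proof (rule INF_greatest)
  let ?Cov = "\<lambda>A. {C :: nat \<Rightarrow> 'a set. A \<subseteq> (\<Union>i. C i) \<and> (\<forall>i. bounded (C i) \<and> diameter (C i) < \<delta>)}"
  let ?g = "\<lambda>X::'a set. ennreal (hausdorff_const s * (diameter X / 2) powr s)"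
  fix C assume "C \<in> ?Cov (P \<union> Q)"
  then have cov: "P \<union> Q \<subseteq> (\<Union>i. C i)" and C: "\<And>i. bounded (C i)" "\<And>i. diameter (C i) < \<delta>"
    by auto
  define CP where "CP i = (if C i \<inter> P = {} then {} else C i)" for i
  define CQ where "CQ i = (if C i \<inter> Q = {} then {} else C i)" for i
  have "C i \<inter> P = {} \<or> C i \<inter> Q = {}" for i
  proof (rule ccontr)
    assume "\<not> ?thesis"
    then obtain p q where "p \<in> C i" "p \<in> P" "q \<in> C i" "q \<in> Q"
      by auto
    then have "\<delta> \<le> diameter (C i)"
      using sep C(1) by (meson diameter_bounded_bound order_trans)
    then show False
      using C(2)[of i] by simp
  qed
  then have split: "?g (CP i) + ?g (CQ i) \<le> ?g (C i)" for i
    unfolding CP_def CQ_def by auto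
  have "CP \<in> ?Cov P" "CQ \<in> ?Cov Q"
    using cov C \<open>0 < \<delta>\<close> unfolding CP_def CQ_def by (auto, blast+)
  then have "euc_hausdorff_delta s \<delta> P + euc_hausdorff_delta s \<delta> Q \<le> (\<Sum>i. ?g (CP i)) + (\<Sum>i. ?g (CQ i))"
    unfolding euc_hausdorff_delta_def by (intro add_mono INF_lower)
  also have "\<dots> = (\<Sum>i. ?g (CP i) + ?g (CQ i))"
    by (rule suminf_add) auto
  also have "\<dots> \<le> (\<Sum>i. ?g (C i))"
    using split by (intro suminf_le) auto
  finally show "euc_hausdorff_delta s \<delta> P + euc_hausdorff_delta s \<delta> Q \<le> (\<Sum>i. ?g (C i))" .
qed

lemma euc_hausdorff_separated_add:
  fixes P Q :: "'a::euclidean_space set"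
  assumes sep: "\<And>p q. p \<in> P \<Longrightarrow> q \<in> Q \<Longrightarrow> \<gamma> \<le> dist p q" and "0 < \<gamma>"
  shows "euc_hausdorff s P + euc_hausdorff s Q \<le> euc_hausdorff s (P \<union> Q)"
proof -
  have "euc_hausdorff_delta s \<delta>1 P + euc_hausdorff_delta s \<delta>2 Q \<le> euc_hausdorff s (P \<union> Q)"
    if "0 < \<delta>1" "0 < \<delta>2" for \<delta>1 \<delta>2
  proof -
    define \<delta> where "\<delta> = min \<gamma> (min \<delta>1 \<delta>2)"
    have \<delta>: "0 < \<delta>" "\<delta> \<le> \<gamma>" "\<delta> \<le> \<delta>1" "\<delta> \<le> \<delta>2"
      using that \<open>0 < \<gamma>\<close> unfolding \<delta>_def by auto
    have "euc_hausdorff_delta s \<delta>1 P + euc_hausdorff_delta s \<delta>2 Q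
        \<le> euc_hausdorff_delta s \<delta> P + euc_hausdorff_delta s \<delta> Q"
      using \<delta> by (intro add_mono euc_hausdorff_delta_antimono)
    also have "\<dots> \<le> euc_hausdorff_delta s \<delta> (P \<union> Q)"
      using \<delta> sep by (intro euc_hausdorff_delta_separated_add) (auto intro: order_trans)
    also have "\<dots> \<le> euc_hausdorff s (P \<union> Q)"
      using \<delta> by (intro euc_hausdorff_delta_le)
    finally show ?thesis .
  qed
  note bound = this
  have "euc_hausdorff s P + euc_hausdorff s Q
      = (SUP \<delta>1\<in>{0<..}. SUP \<delta>2\<in>{0<..}. euc_hausdorff_delta s \<delta>1 P + euc_hausdorff_delta s \<delta>2 Q)"
    unfolding euc_hausdorff_def
    by (subst ennreal_SUP_add_left[symmetric], simp, subst ennreal_SUP_add_right, simp_all)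
  also have "\<dots> \<le> euc_hausdorff s (P \<union> Q)"
    using bound by (intro SUP_least) auto
  finally show ?thesis .
qed

section \<open>Metric outer measures\<close>

definition far_from :: "'a::metric_space set \<Rightarrow> 'a set \<Rightarrow> nat \<Rightarrow> 'a set" where
  "far_from F X j = {x \<in> X. 1 / (real j + 1) \<le> infdist x F}"

definition far_ring :: "'a::metric_space set \<Rightarrow> 'a set \<Rightarrow> nat \<Rightarrow> 'a set" where
  "far_ring F X i = far_from F X (Suc i) - far_from F X i"

lemma far_from_subset: "far_from F X j \<subseteq> X"
  unfolding far_from_def by auto

lemma far_ring_subset: "far_ring F X i \<subseteq> X"
  unfolding far_ring_def using far_from_subset by blast

lemma far_from_mono:
  assumes "i \<le> j"
  shows "far_from F X i \<subseteq> far_from F X j"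
proof -
  have "1 / (real j + 1) \<le> 1 / (real i + 1)"
    using assms by (simp add: frac_le)
  then show ?thesis
    unfolding far_from_def by auto
qed

lemma diff_subset_far_from_Un_far_rings:
  assumes "closed F" "F \<noteq> {}"
  shows "X - F \<subseteq> far_from F X j \<union> (\<Union>i. far_ring F X (i + j))"
proof
  fix x assume x: "x \<in> X - F"
  then have "0 < infdist x F"
    using infdist_pos_not_in_closed[OF assms] by auto
  then obtain n :: nat where "1 / (real n + 1) < infdist x F"
    by (metis reals_Archimedean inverse_eq_divide of_nat_Suc add.commute)
  then have ex: "x \<in> far_from F X n"
    using x unfolding far_from_def by auto
  define m where "m = (LEAST n. x \<in> far_from F X n)"
  have xm: "x \<in> far_from F X m"
    unfolding m_def using ex by (rule LeastI)
  show "x \<in> far_from F X j \<union> (\<Union>i. far_ring F X (i + j))"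
  proof (cases "m \<le> j")
    case True
    then show ?thesis
      using far_from_mono xm by blast
  next
    case False
    then obtain k where k: "m = Suc k" "j \<le> k"
      by (cases m) auto
    then have "x \<notin> far_from F X k"
      unfolding m_def using not_less_Least[of k "\<lambda>n. x \<in> far_from F X n"] by auto
    then have "x \<in> far_ring F X (k - j + j)"
      using xm k unfolding far_ring_def by auto
    then show ?thesis
      by blast
  qed
qed

lemma far_rings_separated:
  assumes "x \<in> (\<Union>i<N. far_ring F X (2 * i + p))" "y \<in> far_ring F X (2 * N + p)" "0 < N"
  shows "1 / real (2 * N + p) - 1 / (real (2 * N + p) + 1) \<le> dist x y"
proof -
  obtain i where "i < N" "x \<in> far_from F X (Suc (2 * i + p))"
    using assms(1) unfolding far_ring_def by auto
  moreover have "1 / real (2 * N + p) \<le> 1 / (real (Suc (2 * i + p)) + 1)" if "i < N" for i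
    using that by (intro frac_le) auto
  ultimately have "1 / real (2 * N + p) \<le> infdist x F"
    unfolding far_from_def by force
  moreover have "infdist y F < 1 / (real (2 * N + p) + 1)"
    using assms(2) unfolding far_ring_def far_from_def by auto
  moreover have "infdist x F \<le> infdist y F + dist x y"
    by (rule infdist_triangle)
  ultimately show ?thesis
    by linarith
qed

locale metric_outer_measure =
  fixes \<mu> :: "'a::metric_space set \<Rightarrow> ennreal"
  assumes empty [simp]: "\<mu> {} = 0"
    and mono: "A \<subseteq> B \<Longrightarrow> \<mu> A \<le> \<mu> B"
    and countably_subadditive: "\<mu> (\<Union>k. C k) \<le> (\<Sum>k. \<mu> (C k))"
    and separated_add:
      "0 < \<gamma> \<Longrightarrow> (\<And>p q. p \<in> P \<Longrightarrow> q \<in> Q \<Longrightarrow> \<gamma> \<le> dist p q) \<Longrightarrow> \<mu> P + \<mu> Q \<le> \<mu> (P \<union> Q)"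
begin

lemma subadditive: "\<mu> (A \<union> B) \<le> \<mu> A + \<mu> B"
proof -
  define C where "C k = (if k = 0 then A else if k = 1 then B else {})" for k :: nat
  have "A \<union> B = (\<Union>k. C k)"
    unfolding C_def by (auto split: if_splits)
  then have "\<mu> (A \<union> B) \<le> (\<Sum>k. \<mu> (C k))"
    using countably_subadditive by simp
  also have "\<dots> = (\<Sum>k\<in>{0, 1}. \<mu> (C k))"
    by (rule suminf_finite) (auto simp: C_def)
  finally show ?thesis
    by (simp add: C_def)
qed

lemma sum_le_Union_of_separated:
  fixes P :: "nat \<Rightarrow> 'a set" and N :: nat
  assumes sep: "\<And>N. \<exists>\<gamma>>0. \<forall>p\<in>(\<Union>i<N. P i). \<forall>q\<in>P N. \<gamma> \<le> dist p q"
  shows "(\<Sum>i<N. \<mu> (P i)) \<le> \<mu> (\<Union>i<N. P i)"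
proof (induction N)
  case 0
  show ?case by simp
next
  case (Suc N)
  obtain \<gamma> where \<gamma>: "0 < \<gamma>" "\<forall>p\<in>(\<Union>i<N. P i). \<forall>q\<in>P N. \<gamma> \<le> dist p q"
    using sep by blast
  have "(\<Sum>i<Suc N. \<mu> (P i)) = (\<Sum>i<N. \<mu> (P i)) + \<mu> (P N)"
    by simp
  also have "\<dots> \<le> \<mu> (\<Union>i<N. P i) + \<mu> (P N)"
    using Suc.IH by (rule add_right_mono)
  also have "\<dots> \<le> \<mu> ((\<Union>i<N. P i) \<union> P N)"
    using \<gamma> by (intro separated_add) auto
  also have "(\<Union>i<N. P i) \<union> P N = (\<Union>i<Suc N. P i)"
    by (auto simp: lessThan_Suc)
  finally show ?case .
qed

lemma add_far_from_le: "\<mu> (X \<inter> F) + \<mu> (far_from F X j) \<le> \<mu> X"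
proof -
  have "\<mu> (X \<inter> F) + \<mu> (far_from F X j) \<le> \<mu> ((X \<inter> F) \<union> far_from F X j)"
  proof (rule separated_add)
    fix p q assume "p \<in> X \<inter> F" "q \<in> far_from F X j"
    then show "1 / (real j + 1) \<le> dist p q"
      unfolding far_from_def using infdist_le[of p F q] by (auto simp: dist_commute)
  qed simp
  also have "\<dots> \<le> \<mu> X"
    using far_from_subset by (intro mono) blast
  finally show ?thesis .
qed

lemma suminf_far_rings_le: "(\<Sum>i. \<mu> (far_ring F X i)) \<le> 2 * \<mu> X"
proof (rule suminf_le_const)
  have parity: "(\<Sum>i<N. \<mu> (far_ring F X (2 * i + p))) \<le> \<mu> X" for N p
  proof -
    have "(\<Sum>i<N. \<mu> (far_ring F X (2 * i + p))) \<le> \<mu> (\<Union>i<N. far_ring F X (2 * i + p))"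
    proof (rule sum_le_Union_of_separated)
      fix N
      show "\<exists>\<gamma>>0. \<forall>x\<in>(\<Union>i<N. far_ring F X (2 * i + p)). \<forall>y\<in>far_ring F X (2 * N + p). \<gamma> \<le> dist x y"
      proof (cases "N = 0")
        case False
        then show ?thesis
          using far_rings_separated[where N = N and F = F and X = X and p = p]
          by (intro exI[of _ "1 / real (2 * N + p) - 1 / (real (2 * N + p) + 1)"]) (auto simp: frac_less2)
      qed (auto intro: exI[of _ 1])
    qed
    also have "\<dots> \<le> \<mu> X"
      using far_ring_subset by (intro mono) blast
    finally show ?thesis .
  qed
  fix n
  have "(\<Sum>i<n. \<mu> (far_ring F X i)) \<le> (\<Sum>i<2 * n. \<mu> (far_ring F X i))"
    by (intro sum_mono2) auto
  also have "\<dots> = (\<Sum>i<n. \<mu> (far_ring F X (2 * i))) + (\<Sum>i<n. \<mu> (far_ring F X (2 * i + 1)))"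
    by (induction n) (simp_all add: ac_simps)
  also have "\<dots> \<le> \<mu> X + \<mu> X"
    using parity[where N = n and p = 0] parity[where N = n and p = 1]
    by (intro add_mono) simp_all
  finally show "(\<Sum>i<n. \<mu> (far_ring F X i)) \<le> 2 * \<mu> X"
    by (simp add: mult_2)
qed simp

lemma caratheodory_closed:
  assumes "closed F"
  shows "\<mu> (X \<inter> F) + \<mu> (X - F) \<le> \<mu> X"
proof (cases "F = {} \<or> \<mu> X = top")
  case True
  then show ?thesis by auto
next
  case False
  then have "F \<noteq> {}" and "\<mu> X < top"
    by (auto simp: top.not_eq_extremum)
  let ?R = "\<lambda>i. \<mu> (far_ring F X i)"
  have R_fin: "(\<Sum>i. ?R i) < top"
    using suminf_far_rings_le[of F X] \<open>\<mu> X < top\<close> by (simp add: mult_2 le_less_trans)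
  define r where "r i = enn2real (?R i)" for i
  have R_eq: "?R i = ennreal (r i)" for i
    unfolding r_def using ennreal_suminf_lessD[OF R_fin, of i] by (simp add: less_top)
  have r_nonneg: "0 \<le> r i" for i
    unfolding r_def by simp
  have "summable r"
    using R_fin r_nonneg unfolding R_eq by (intro summable_suminf_not_top) auto
  \<comment> \<open>Points of \<open>X - F\<close> close to \<open>F\<close> lie in the tail of the rings, whose total mass is small.\<close>
  show ?thesis
  proof (rule ennreal_le_epsilon)
    fix e :: real assume "0 < e"
    then obtain j where j: "norm (\<Sum>i. r (i + j)) < e"
      using suminf_exist_split[OF _ \<open>summable r\<close>] by blast
    have "(\<Sum>i. ?R (i + j)) = ennreal (\<Sum>i. r (i + j))"
      unfolding R_eq using r_nonneg summable_ignore_initial_segment[OF \<open>summable r\<close>]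
      by (intro suminf_ennreal2) auto
    also have "\<dots> \<le> ennreal e"
      using j by (intro ennreal_leI) auto
    finally have tail: "(\<Sum>i. ?R (i + j)) \<le> ennreal e" .
    have "\<mu> (X - F) \<le> \<mu> (far_from F X j \<union> (\<Union>i. far_ring F X (i + j)))"
      using diff_subset_far_from_Un_far_rings[OF \<open>closed F\<close> \<open>F \<noteq> {}\<close>] by (rule mono)
    also have "\<dots> \<le> \<mu> (far_from F X j) + (\<Sum>i. ?R (i + j))"
      using subadditive countably_subadditive by (rule order_trans[OF _ add_left_mono])
    also have "\<dots> \<le> \<mu> (far_from F X j) + ennreal e"
      using tail by (rule add_left_mono)
    finally have "\<mu> (X \<inter> F) + \<mu> (X - F) \<le> \<mu> (X \<inter> F) + \<mu> (far_from F X j) + ennreal e"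
      by (simp add: add.assoc add_left_mono)
    also have "\<dots> \<le> \<mu> X + ennreal e"
      using add_far_from_le by (rule add_right_mono)
    finally show "\<mu> (X \<inter> F) + \<mu> (X - F) \<le> \<mu> X + ennreal e" .
  qed
qed

lemma suminf_layers_le:
  assumes closed: "\<And>m. closed (S m)" and "incseq S"
  shows "(\<Sum>m. \<mu> (A \<inter> S (Suc m) - S m)) \<le> \<mu> A"
proof (rule suminf_le_const)
  fix N
  have "(\<Sum>m<N. \<mu> (A \<inter> S (Suc m) - S m)) \<le> \<mu> (A \<inter> S N)"
  proof (induction N)
    case 0
    show ?case by simp
  next
    case (Suc N)
    have "A \<inter> S (Suc N) \<inter> S N = A \<inter> S N"
      using \<open>incseq S\<close> by (auto simp: incseq_Suc_iff)
    then have step: "\<mu> (A \<inter> S N) + \<mu> (A \<inter> S (Suc N) - S N) \<le> \<mu> (A \<inter> S (Suc N))"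
      using caratheodory_closed[OF closed[of N], of "A \<inter> S (Suc N)"] by simp
    have "(\<Sum>m<Suc N. \<mu> (A \<inter> S (Suc m) - S m))
        = (\<Sum>m<N. \<mu> (A \<inter> S (Suc m) - S m)) + \<mu> (A \<inter> S (Suc N) - S N)"
      by simp
    also have "\<dots> \<le> \<mu> (A \<inter> S N) + \<mu> (A \<inter> S (Suc N) - S N)"
      using Suc.IH by (rule add_right_mono)
    finally show ?case
      using step by (rule order_trans)
  qed
  also have "\<dots> \<le> \<mu> A"
    by (intro mono) auto
  finally show "(\<Sum>m<N. \<mu> (A \<inter> S (Suc m) - S m)) \<le> \<mu> A" .
qed simp

end

interpretation euc_hausdorff: metric_outer_measure "euc_hausdorff s :: 'a::euclidean_space set \<Rightarrow> ennreal"
  by unfold_locales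
    (auto intro: euc_hausdorff_mono euc_hausdorff_countably_subadditive euc_hausdorff_separated_add)

section \<open>The codimension-one Hausdorff measure\<close>

lemma codim1_H_delta_mono: "A \<subseteq> B \<Longrightarrow> codim1_H_delta \<omega> d \<delta> A \<le> codim1_H_delta \<omega> d \<delta> B"
  unfolding codim1_H_delta_def by (intro INF_superset_mono) auto

lemma codim1_H_mono: "A \<subseteq> B \<Longrightarrow> codim1_H \<omega> d A \<le> codim1_H \<omega> d B"
  unfolding codim1_H_def by (intro SUP_mono) (auto intro: codim1_H_delta_mono)

lemma codim1_H_delta_countably_subadditive:
  fixes B :: "nat \<Rightarrow> 'a::euclidean_space set"
  shows "codim1_H_delta \<omega> d \<delta> (\<Union>k. B k) \<le> (\<Sum>k. codim1_H_delta \<omega> d \<delta> (B k))"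
  unfolding codim1_H_delta_def
proof (rule INF_covers_countably_subadditive
    [where Cov = "\<lambda>A. {(I, c, r). A \<subseteq> (\<Union>i\<in>I. dball d (c i) (r i)) \<and> (\<forall>i\<in>I. 0 < r i \<and> r i < \<delta>)}"
       and cost = "\<lambda>(I, c, r). \<Sum>i. if i \<in> I then wmu \<omega> (dball d (c i) (r i)) / ennreal (r i) else 0"])
  let ?Cov = "\<lambda>A. {(I, c, r). A \<subseteq> (\<Union>i\<in>I. dball d (c i) (r i)) \<and> (\<forall>i\<in>I. 0 < r i \<and> r i < \<delta>)}"
  let ?cost = "\<lambda>(I, c, r). \<Sum>i. if i \<in> I then wmu \<omega> (dball d (c i) (r i)) / ennreal (r i) else 0"
  fix Cs :: "nat \<Rightarrow> nat set \<times> (nat \<Rightarrow> 'a) \<times> (nat \<Rightarrow> real)"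
  assume Cs: "\<And>k. Cs k \<in> ?Cov (B k)"
  define Is where "Is k = fst (Cs k)" for k
  define cs where "cs k = fst (snd (Cs k))" for k
  define rs where "rs k = snd (snd (Cs k))" for k
  have Cs_eq: "Cs k = (Is k, cs k, rs k)" for k
    unfolding Is_def cs_def rs_def by simp
  define f where "f k i = (if i \<in> Is k then wmu \<omega> (dball d (cs k i) (rs k i)) / ennreal (rs k i) else 0)" for k i
  define I where "I = {j. snd (prod_decode j) \<in> Is (fst (prod_decode j))}"
  define c where "c j = cs (fst (prod_decode j)) (snd (prod_decode j))" for j
  define r where "r j = rs (fst (prod_decode j)) (snd (prod_decode j))" for j
  have "(I, c, r) \<in> ?Cov (\<Union>k. B k)"
  proof safe
    fix x k assume "x \<in> B k"
    then obtain i where "i \<in> Is k" "x \<in> dball d (cs k i) (rs k i)"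
      using Cs[of k] unfolding Cs_eq by auto
    then show "x \<in> (\<Union>j\<in>I. dball d (c j) (r j))"
      unfolding I_def c_def r_def by (intro UN_I[of "prod_encode (k, i)"]) auto
  qed (use Cs in \<open>auto simp: Cs_eq I_def r_def\<close>)
  moreover have "?cost (I, c, r) = (\<Sum>k. ?cost (Cs k))"
  proof -
    have "?cost (I, c, r) = (\<Sum>j. (\<lambda>(k, i). f k i) (prod_decode j))"
      unfolding I_def c_def r_def f_def by (simp only: prod.case) (simp add: split_beta)
    also have "\<dots> = (\<Sum>k. \<Sum>i. f k i)"
      by (rule suminf_ennreal_2dimen) simp
    finally show ?thesis
      unfolding Cs_eq f_def by simp
  qed
  ultimately show "\<exists>C\<in>?Cov (\<Union>k. B k). ?cost C \<le> (\<Sum>k. ?cost (Cs k))"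
    by (intro bexI[of _ "(I, c, r)"]) simp_all
qed

lemma codim1_H_countably_subadditive:
  fixes B :: "nat \<Rightarrow> 'a::euclidean_space set"
  shows "codim1_H \<omega> d (\<Union>k. B k) \<le> (\<Sum>k. codim1_H \<omega> d (B k))"
  unfolding codim1_H_def[of \<omega> d "\<Union>k. B k"]
proof (rule SUP_least)
  fix \<delta> :: real assume "\<delta> \<in> {0<..}"
  then have "(\<Sum>k. codim1_H_delta \<omega> d \<delta> (B k)) \<le> (\<Sum>k. codim1_H \<omega> d (B k))"
    unfolding codim1_H_def by (intro suminf_le SUP_upper) auto
  then show "codim1_H_delta \<omega> d \<delta> (\<Union>k. B k) \<le> (\<Sum>k. codim1_H \<omega> d (B k))"
    by (rule order_trans[OF codim1_H_delta_countably_subadditive])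
qed

section \<open>Strong \<open>A\<^sub>\<infinity>\<close> weights\<close>

lemma sets_wmeasure [simp]: "sets (wmeasure \<omega>) = sets lebesgue"
  unfolding wmeasure_def by simp

lemma wmeasure_sets_open: "open S \<Longrightarrow> S \<in> sets (wmeasure \<omega>)"
  by (simp add: borel_open)

lemma wmeasure_sets_closed: "closed S \<Longrightarrow> S \<in> sets (wmeasure \<omega>)"
  by (simp add: borel_closed)

lemma strong_Ainf_with_doublingE:
  assumes "strong_Ainf_with \<omega> d"
  obtains Cd where "0 \<le> Cd" "\<And>x r. 0 < r \<Longrightarrow> wmu \<omega> (ball x (2 * r)) \<le> ennreal Cd * wmu \<omega> (ball x r)"
proof -
  obtain Cd where "\<forall>x r. 0 < r \<longrightarrow> wmu \<omega> (ball x (2 * r)) \<le> ennreal Cd * wmu \<omega> (ball x r)"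
    using assms unfolding strong_Ainf_with_def by blast
  then show ?thesis
    by (intro that[of "max 0 Cd"]) (simp_all add: ennreal_max_0)
qed

lemma strong_Ainf_with_comparison:
  fixes \<omega> :: "'a::euclidean_space \<Rightarrow> real"
  assumes "strong_Ainf_with \<omega> d"
  shows "\<exists>C\<ge>1. \<forall>x y. enn2real (wmu \<omega> (Bxy x y)) powr (1 / real DIM('a)) / C \<le> d x y \<and>
                    d x y \<le> C * enn2real (wmu \<omega> (Bxy x y)) powr (1 / real DIM('a))"
  using assms unfolding strong_Ainf_with_def by blast

lemma strong_Ainf_with_dist_self: "strong_Ainf_with \<omega> d \<Longrightarrow> d x x = 0"
  unfolding strong_Ainf_with_def is_metric_def by blast

lemma wmu_bounded_finite:
  assumes "strong_Ainf_with \<omega> d" and "bounded K"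
  shows "wmu \<omega> K < \<infinity>"
proof -
  have \<omega>: "\<omega> \<in> borel_measurable lebesgue" "(\<integral>\<^sup>+x\<in>closure K. ennreal (\<omega> x) \<partial>lebesgue) < \<infinity>"
    using assms unfolding strong_Ainf_with_def by auto
  have "wmu \<omega> K \<le> wmu \<omega> (closure K)"
    by (intro emeasure_mono closure_subset wmeasure_sets_closed) auto
  also have "\<dots> = (\<integral>\<^sup>+x\<in>closure K. ennreal (\<omega> x) \<partial>lebesgue)"
    unfolding wmeasure_def using \<omega>(1) by (subst emeasure_density) (auto simp: borel_closed)
  finally show ?thesis
    using \<omega>(2) by simp
qed

lemma wmu_singleton:
  assumes "strong_Ainf_with \<omega> d"
  shows "wmu \<omega> {x} = 0"
proof -
  have "\<omega> \<in> borel_measurable lebesgue"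
    using assms unfolding strong_Ainf_with_def by blast
  then have "wmu \<omega> {x} = (\<integral>\<^sup>+y. ennreal (\<omega> y) * indicator {x} y \<partial>lebesgue)"
    unfolding wmeasure_def by (subst emeasure_density) auto
  also have "\<dots> = 0"
    by (rule nn_integral_null_set) simp
  finally show ?thesis .
qed

lemma wmu_ball_doubling_iterate:
  assumes "0 \<le> Cd" and dbl: "\<And>x r. 0 < r \<Longrightarrow> wmu \<omega> (ball x (2 * r)) \<le> ennreal Cd * wmu \<omega> (ball x r)"
    and "0 < r"
  shows "wmu \<omega> (ball x (2 ^ k * r)) \<le> ennreal (Cd ^ k) * wmu \<omega> (ball x r)"
proof (induction k)
  case 0
  show ?case by simp
next
  case (Suc k)
  have "wmu \<omega> (ball x (2 ^ Suc k * r)) \<le> ennreal Cd * wmu \<omega> (ball x (2 ^ k * r))"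
    using dbl[of "2 ^ k * r" x] \<open>0 < r\<close> by (simp add: mult.assoc)
  also have "\<dots> \<le> ennreal Cd * (ennreal (Cd ^ k) * wmu \<omega> (ball x r))"
    using Suc.IH by (rule mult_left_mono) simp
  also have "\<dots> = ennreal (Cd ^ Suc k) * wmu \<omega> (ball x r)"
    using \<open>0 \<le> Cd\<close> by (simp add: ennreal_mult mult.assoc)
  finally show ?case .
qed

lemma wmu_ball_le_Bxy:
  assumes "0 \<le> Cd" and dbl: "\<And>x r. 0 < r \<Longrightarrow> wmu \<omega> (ball x (2 * r)) \<le> ennreal Cd * wmu \<omega> (ball x r)"
    and "x \<noteq> y"
  shows "wmu \<omega> (ball x (2 * dist x y)) \<le> ennreal (Cd ^ 3) * wmu \<omega> (Bxy x y)"
proof -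
  define R where "R = dist x y"
  have "0 < R"
    using \<open>x \<noteq> y\<close> unfolding R_def by simp
  have "ball x (2 * R) \<subseteq> ball (midpoint x y) (2 ^ 3 * (R / 2))"
  proof
    fix z assume "z \<in> ball x (2 * R)"
    moreover have "dist (midpoint x y) x = R / 2"
      unfolding R_def by (simp add: dist_midpoint dist_commute)
    ultimately show "z \<in> ball (midpoint x y) (2 ^ 3 * (R / 2))"
      using dist_triangle[of "midpoint x y" z x] \<open>0 < R\<close> by simp
  qed
  then have "wmu \<omega> (ball x (2 * R)) \<le> wmu \<omega> (ball (midpoint x y) (2 ^ 3 * (R / 2)))"
    by (intro emeasure_mono wmeasure_sets_open) auto
  also have "\<dots> \<le> ennreal (Cd ^ 3) * wmu \<omega> (ball (midpoint x y) (R / 2))"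
    using \<open>0 < R\<close> by (intro wmu_ball_doubling_iterate[OF \<open>0 \<le> Cd\<close> dbl]) auto
  also have "\<dots> \<le> ennreal (Cd ^ 3) * wmu \<omega> (Bxy x y)"
    unfolding Bxy_def R_def by (intro mult_left_mono emeasure_mono wmeasure_sets_closed) auto
  finally show ?thesis
    unfolding R_def .
qed

lemma powr_inverse_le_imp_le_power:
  fixes a b :: real
  assumes "0 \<le> a" "0 < n" "a powr (1 / real n) \<le> b"
  shows "a \<le> b ^ n"
proof (cases "a = 0")
  case True
  then show ?thesis
    using assms by simp
next
  case False
  then have "a = (a powr (1 / real n)) ^ n"
    using assms by (simp add: powr_realpow[symmetric] powr_powr)
  also have "\<dots> \<le> b ^ n"
    using assms by (intro power_mono) auto
  finally show ?thesis .
qed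

lemma wmu_Bxy_le:
  fixes \<omega> :: "'a::euclidean_space \<Rightarrow> real"
  assumes "strong_Ainf_with \<omega> d" and "0 < C"
    and lower: "enn2real (wmu \<omega> (Bxy x y)) powr (1 / real DIM('a)) / C \<le> d x y"
    and "d x y < \<rho>"
  shows "wmu \<omega> (Bxy x y) \<le> ennreal ((C * \<rho>) ^ DIM('a))"
proof -
  have "wmu \<omega> (Bxy x y) < \<infinity>"
    unfolding Bxy_def using assms(1) by (rule wmu_bounded_finite) simp
  then have eq: "wmu \<omega> (Bxy x y) = ennreal (enn2real (wmu \<omega> (Bxy x y)))"
    by (simp add: less_top)
  have "enn2real (wmu \<omega> (Bxy x y)) powr (1 / real DIM('a)) \<le> C * d x y"
    using lower \<open>0 < C\<close> by (simp add: divide_le_eq mult.commute)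
  also have "\<dots> \<le> C * \<rho>"
    using \<open>d x y < \<rho>\<close> \<open>0 < C\<close> by simp
  finally have "enn2real (wmu \<omega> (Bxy x y)) \<le> (C * \<rho>) ^ DIM('a)"
    by (intro powr_inverse_le_imp_le_power) auto
  then show ?thesis
    by (subst eq) (rule ennreal_leI)
qed

lemma bounded_subset_ball_twice_dist:
  fixes S :: "'a::metric_space set"
  assumes "bounded S" "y0 \<in> S" "y0 \<noteq> x"
  obtains y where "y \<in> S" "y \<noteq> x" "S \<subseteq> ball x (2 * dist x y)"
proof -
  define T where "T = dist x ` S"
  have bdd: "bdd_above T"
    using \<open>bounded S\<close> unfolding T_def bounded_any_center[of S x] bdd_above_def by auto
  have "0 < dist x y0"
    using \<open>y0 \<noteq> x\<close> by simp
  also have "dist x y0 \<le> Sup T"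
    using bdd \<open>y0 \<in> S\<close> unfolding T_def by (intro cSup_upper) auto
  finally have "Sup T / 2 < Sup T"
    by simp
  then have "\<exists>t\<in>T. Sup T / 2 < t"
    using less_cSup_iff[of T] bdd \<open>y0 \<in> S\<close> unfolding T_def by blast
  then obtain y where y: "y \<in> S" "Sup T / 2 < dist x y"
    unfolding T_def by blast
  moreover have "S \<subseteq> ball x (2 * dist x y)"
  proof
    fix z assume "z \<in> S"
    then have "dist x z \<le> Sup T"
      using bdd unfolding T_def by (intro cSup_upper) auto
    then show "z \<in> ball x (2 * dist x y)"
      using y by simp
  qed
  moreover have "y \<noteq> x"
  proof
    assume "y = x"
    with y(2) \<open>Sup T / 2 < Sup T\<close> show False
      by simp
  qed
  ultimately show ?thesis
    using that by blast
qed

lemma wmu_bounded_subset_dball_le: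
  fixes \<omega> :: "'a::euclidean_space \<Rightarrow> real"
  assumes w: "strong_Ainf_with \<omega> d" and "0 \<le> Cd"
    and dbl: "\<And>x r. 0 < r \<Longrightarrow> wmu \<omega> (ball x (2 * r)) \<le> ennreal Cd * wmu \<omega> (ball x r)"
    and "0 < C" and lower: "\<And>x y. enn2real (wmu \<omega> (Bxy x y)) powr (1 / real DIM('a)) / C \<le> d x y"
    and "bounded S" "S \<subseteq> dball d x \<rho>"
  shows "wmu \<omega> S \<le> ennreal (Cd ^ 3) * ennreal ((C * \<rho>) ^ DIM('a))"
proof (cases "S \<subseteq> {x}")
  case True
  then have "wmu \<omega> S \<le> wmu \<omega> {x}"
    by (intro emeasure_mono wmeasure_sets_closed) auto
  then show ?thesis
    using wmu_singleton[OF w] by simp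
next
  case False
  then obtain y0 where "y0 \<in> S" "y0 \<noteq> x"
    by auto
  then obtain y where y: "y \<in> S" "y \<noteq> x" and "S \<subseteq> ball x (2 * dist x y)"
    using bounded_subset_ball_twice_dist \<open>bounded S\<close> by metis
  then have "wmu \<omega> S \<le> wmu \<omega> (ball x (2 * dist x y))"
    by (intro emeasure_mono wmeasure_sets_open) auto
  also have "\<dots> \<le> ennreal (Cd ^ 3) * wmu \<omega> (Bxy x y)"
    using \<open>0 \<le> Cd\<close> dbl y(2) by (intro wmu_ball_le_Bxy) (auto simp: eq_commute)
  also have "\<dots> \<le> ennreal (Cd ^ 3) * ennreal ((C * \<rho>) ^ DIM('a))"
    using y(1) \<open>S \<subseteq> dball d x \<rho>\<close> \<open>0 < C\<close> unfolding dball_def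
    by (intro mult_left_mono wmu_Bxy_le[OF w _ lower]) auto
  finally show ?thesis .
qed

lemma emeasure_le_of_bounded_parts:
  fixes M :: "'a::metric_space measure"
  assumes balls: "\<And>r. ball x r \<in> sets M" and parts: "\<And>k::nat. emeasure M (A \<inter> ball x (real k)) \<le> c"
  shows "emeasure M A \<le> c"
proof (cases "A \<in> sets M")
  case False
  then show ?thesis
    by (simp add: emeasure_notin_sets)
next
  case True
  have "A \<subseteq> (\<Union>k. A \<inter> ball x (real k))"
  proof
    fix z assume "z \<in> A"
    moreover obtain k :: nat where "dist x z < real k"
      using reals_Archimedean2 by blast
    ultimately show "z \<in> (\<Union>k. A \<inter> ball x (real k))"
      by auto
  qed
  then have "(\<Union>k. A \<inter> ball x (real k)) = A"
    by auto
  moreover have "range (\<lambda>k. A \<inter> ball x (real k)) \<subseteq> sets M" "incseq (\<lambda>k. A \<inter> ball x (real k))"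
    using True balls unfolding incseq_def by auto
  ultimately have "emeasure M A = (SUP k. emeasure M (A \<inter> ball x (real k)))"
    by (simp add: SUP_emeasure_incseq)
  also have "\<dots> \<le> c"
    using parts by (intro SUP_least)
  finally show ?thesis .
qed

lemma strong_Ainf_with_dball_le:
  fixes \<omega> :: "'a::euclidean_space \<Rightarrow> real"
  assumes w: "strong_Ainf_with \<omega> d"
  obtains M where "0 < M" "\<And>x \<rho>. 0 < \<rho> \<Longrightarrow> wmu \<omega> (dball d x \<rho>) \<le> ennreal (M * \<rho> ^ DIM('a))"
proof -
  obtain Cd where "0 \<le> Cd" and dbl: "\<And>x r. 0 < r \<Longrightarrow> wmu \<omega> (ball x (2 * r)) \<le> ennreal Cd * wmu \<omega> (ball x r)"
    using strong_Ainf_with_doublingE[OF w] by blast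
  obtain C where "1 \<le> C"
    and C: "\<forall>x y. enn2real (wmu \<omega> (Bxy x y)) powr (1 / real DIM('a)) / C \<le> d x y \<and>
                  d x y \<le> C * enn2real (wmu \<omega> (Bxy x y)) powr (1 / real DIM('a))"
    using strong_Ainf_with_comparison[OF w] by blast
  then have lower: "\<And>x y. enn2real (wmu \<omega> (Bxy x y)) powr (1 / real DIM('a)) / C \<le> d x y"
    by blast
  define M where "M = Cd ^ 3 * C ^ DIM('a) + 1"
  \<comment> \<open>\<open>d\<close>-balls are not known to be bounded, so the bound is first proved on bounded parts.\<close>
  have "wmu \<omega> (dball d x \<rho>) \<le> ennreal (M * \<rho> ^ DIM('a))" if "0 < \<rho>" for x \<rho>
  proof (rule emeasure_le_of_bounded_parts[of x])
    fix k :: nat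
    have "wmu \<omega> (dball d x \<rho> \<inter> ball x (real k)) \<le> ennreal (Cd ^ 3) * ennreal ((C * \<rho>) ^ DIM('a))"
      using \<open>1 \<le> C\<close> by (intro wmu_bounded_subset_dball_le[OF w \<open>0 \<le> Cd\<close> dbl _ lower]) auto
    also have "\<dots> = ennreal (Cd ^ 3 * C ^ DIM('a) * \<rho> ^ DIM('a))"
      using \<open>0 \<le> Cd\<close> \<open>1 \<le> C\<close> that
      by (simp add: ennreal_mult[symmetric] power_mult_distrib mult.assoc)
    also have "\<dots> \<le> ennreal (M * \<rho> ^ DIM('a))"
      unfolding M_def using that by (intro ennreal_leI mult_right_mono) auto
    finally show "wmu \<omega> (dball d x \<rho> \<inter> ball x (real k)) \<le> ennreal (M * \<rho> ^ DIM('a))" .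
  qed (rule wmeasure_sets_open, simp)
  moreover have "0 < M"
    unfolding M_def using \<open>0 \<le> Cd\<close> \<open>1 \<le> C\<close> by (intro add_nonneg_pos) auto
  ultimately show ?thesis
    using that by blast
qed

section \<open>Comparison of the two Hausdorff measures\<close>

lemma closed_wmu_ball_le: "closed {x. wmu \<omega> (ball x r) \<le> c}"
  unfolding closed_sequential_limits
proof (intro allI impI, elim conjE)
  fix xs x assume xs: "\<forall>k. xs k \<in> {x. wmu \<omega> (ball x r) \<le> c}" and "xs \<longlonglongrightarrow> x"
  have ind: "indicator (ball x r) z \<le> liminf (\<lambda>k. indicator (ball (xs k) r) z :: ennreal)" for z
  proof (cases "z \<in> ball x r")
    case True
    have "(\<lambda>k. dist (xs k) z) \<longlonglongrightarrow> dist x z"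
      using \<open>xs \<longlonglongrightarrow> x\<close> by (intro tendsto_dist) auto
    then have "eventually (\<lambda>k. dist (xs k) z < r) sequentially"
      using True by (intro order_tendstoD) auto
    then have "eventually (\<lambda>k. 1 \<le> (indicator (ball (xs k) r) z :: ennreal)) sequentially"
      by (auto elim: eventually_mono)
    then show ?thesis
      using True by (simp add: Liminf_bounded)
  qed simp
  \<comment> \<open>Fatou's lemma: the measure of a ball is lower semicontinuous in its centre.\<close>
  have "wmu \<omega> (ball x r) = (\<integral>\<^sup>+z. indicator (ball x r) z \<partial>wmeasure \<omega>)"
    by (simp add: wmeasure_sets_open)
  also have "\<dots> \<le> (\<integral>\<^sup>+z. liminf (\<lambda>k. indicator (ball (xs k) r) z) \<partial>wmeasure \<omega>)"
    using ind by (intro nn_integral_mono) auto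
  also have "\<dots> \<le> liminf (\<lambda>k. \<integral>\<^sup>+z. indicator (ball (xs k) r) z \<partial>wmeasure \<omega>)"
    by (intro nn_integral_liminf borel_measurable_indicator wmeasure_sets_open) simp
  also have "\<dots> = liminf (\<lambda>k. wmu \<omega> (ball (xs k) r))"
    by (simp add: wmeasure_sets_open)
  also have "\<dots> \<le> c"
    using xs by (intro Liminf_le) auto
  finally show "x \<in> {x. wmu \<omega> (ball x r) \<le> c}"
    by simp
qed

definition density_below :: "('a::euclidean_space \<Rightarrow> real) \<Rightarrow> real \<Rightarrow> real \<Rightarrow> 'a set" where
  "density_below \<omega> \<epsilon> \<rho> = {x. \<forall>r. 0 < r \<and> r < \<rho> \<longrightarrow> wmu \<omega> (ball x r) \<le> ennreal (\<epsilon> * r ^ DIM('a))}"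

lemma closed_density_below: "closed (density_below \<omega> \<epsilon> \<rho>)"
proof -
  have "density_below \<omega> \<epsilon> \<rho> = (\<Inter>r\<in>{0<..<\<rho>}. {x. wmu \<omega> (ball x r) \<le> ennreal (\<epsilon> * r ^ DIM('a))})"
    unfolding density_below_def by auto
  then show ?thesis
    by (auto intro!: closed_wmu_ball_le)
qed

lemma density_below_antimono: "\<rho>' \<le> \<rho> \<Longrightarrow> density_below \<omega> \<epsilon> \<rho> \<subseteq> density_below \<omega> \<epsilon> \<rho>'"
  unfolding density_below_def by auto

lemma Limsup_less_imp_density_below:
  fixes \<omega> :: "'a::euclidean_space \<Rightarrow> real"
  assumes "Limsup (at_right 0) (\<lambda>r. wmu \<omega> (ball x r) / ennreal (r ^ DIM('a))) < ennreal \<epsilon>" "0 < \<epsilon>"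
  obtains \<rho> where "0 < \<rho>" "x \<in> density_below \<omega> \<epsilon> \<rho>"
proof -
  have "eventually (\<lambda>r. wmu \<omega> (ball x r) / ennreal (r ^ DIM('a)) < ennreal \<epsilon>) (at_right 0)"
    using assms(1) by (rule Limsup_lessD)
  then obtain \<rho> :: real where "0 < \<rho>"
    and \<rho>: "\<And>r. 0 < r \<Longrightarrow> r < \<rho> \<Longrightarrow> wmu \<omega> (ball x r) / ennreal (r ^ DIM('a)) < ennreal \<epsilon>"
    unfolding eventually_at_right_field by blast
  have "x \<in> density_below \<omega> \<epsilon> \<rho>"
    unfolding density_below_def
  proof safe
    fix r :: real assume "0 < r" "r < \<rho>"
    then have "wmu \<omega> (ball x r) < ennreal \<epsilon> * ennreal (r ^ DIM('a))"
      using \<rho>[of r] by (subst (asm) divide_less_ennreal) auto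
    then show "wmu \<omega> (ball x r) \<le> ennreal (\<epsilon> * r ^ DIM('a))"
      using \<open>0 < \<epsilon>\<close> \<open>0 < r\<close> by (simp add: ennreal_mult[symmetric])
  qed
  then show ?thesis
    using \<open>0 < \<rho>\<close> that by blast
qed

lemma d_le_of_wmu_ball_le:
  fixes \<omega> :: "'a::euclidean_space \<Rightarrow> real"
  assumes upper: "\<And>x y. d x y \<le> C * enn2real (wmu \<omega> (Bxy x y)) powr (1 / real n)"
    and "0 \<le> C" "0 < n" "0 \<le> \<epsilon>" "dist y x \<le> t" "0 < t"
    and small: "wmu \<omega> (ball y (2 * t)) \<le> ennreal (\<epsilon> * (2 * t) ^ n)"
  shows "d y x \<le> 2 * C * \<epsilon> powr (1 / real n) * t"
proof -
  have "Bxy y x \<subseteq> ball y (2 * t)"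
  proof
    fix z assume "z \<in> Bxy y x"
    then have "dist (midpoint y x) z \<le> dist y x / 2"
      unfolding Bxy_def by simp
    moreover have "dist y (midpoint y x) = dist y x / 2"
      by (simp add: dist_midpoint)
    ultimately show "z \<in> ball y (2 * t)"
      using dist_triangle[of y z "midpoint y x"] assms(5,6) by simp
  qed
  then have "wmu \<omega> (Bxy y x) \<le> ennreal (\<epsilon> * (2 * t) ^ n)"
    using small by (meson emeasure_mono wmeasure_sets_open open_ball order_trans)
  then have "enn2real (wmu \<omega> (Bxy y x)) \<le> \<epsilon> * (2 * t) ^ n"
    using assms by (intro enn2real_leI) auto
  then have "enn2real (wmu \<omega> (Bxy y x)) powr (1 / real n) \<le> (\<epsilon> * (2 * t) ^ n) powr (1 / real n)"
    by (intro powr_mono2) auto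
  also have "\<dots> = \<epsilon> powr (1 / real n) * (2 * t)"
    using assms by (simp add: powr_mult powr_realpow[symmetric] powr_powr)
  finally show ?thesis
    using upper[of y x] mult_left_mono[OF _ \<open>0 \<le> C\<close>] by (fastforce simp: mult_ac)
qed

lemma d_le_dist_of_uniform_density:
  fixes \<omega> :: "'a::euclidean_space \<Rightarrow> real"
  assumes upper: "\<And>x y. d x y \<le> C * enn2real (wmu \<omega> (Bxy x y)) powr (1 / real n)"
    and "0 \<le> C" "0 < n" "0 \<le> \<epsilon>" "d y y = 0"
    and small: "\<And>r. 0 < r \<Longrightarrow> r < R \<Longrightarrow> wmu \<omega> (ball y r) \<le> ennreal (\<epsilon> * r ^ n)"
    and "dist y x < R / 2"
  shows "d y x \<le> 2 * C * \<epsilon> powr (1 / real n) * dist y x"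
proof (cases "x = y")
  case True
  then show ?thesis
    using \<open>d y y = 0\<close> by simp
next
  case False
  then have "wmu \<omega> (ball y (2 * dist y x)) \<le> ennreal (\<epsilon> * (2 * dist y x) ^ n)"
    using \<open>dist y x < R / 2\<close> by (intro small) auto
  with False show ?thesis
    using assms by (intro d_le_of_wmu_ball_le[OF upper]) auto
qed

lemma power_add_le_two_power:
  fixes u v :: real
  assumes "0 \<le> u" "0 \<le> v"
  shows "(u + v) ^ k \<le> 2 ^ k * (u ^ k + v ^ k)"
proof -
  have "(u + v) ^ k \<le> (2 * max u v) ^ k"
    using assms by (intro power_mono) auto
  also have "\<dots> = 2 ^ k * max u v ^ k"
    by (simp add: power_mult_distrib)
  also have "max u v ^ k \<le> u ^ k + v ^ k"
    using assms by (cases "u \<le> v") (auto simp: max_def)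
  finally show ?thesis
    by simp
qed

lemma hausdorff_const_pos: "0 \<le> s \<Longrightarrow> 0 < hausdorff_const s"
  unfolding hausdorff_const_def by (intro divide_pos_pos Gamma_real_pos) auto

lemma dball_cost_le:
  fixes M L t \<tau> :: real
  assumes "2 \<le> n" "0 \<le> M" "0 \<le> L" "0 \<le> t" "0 < \<tau>" "\<tau> \<le> 1"
  shows "M * (L * t + \<tau>) ^ (n - 1)
    \<le> M * 4 ^ (n - 1) * L ^ (n - 1) / hausdorff_const (real n - 1)
        * (hausdorff_const (real n - 1) * (t / 2) powr (real n - 1)) + M * 2 ^ (n - 1) * \<tau>"
proof -
  define k where "k = n - 1"
  have "1 \<le> k" and k: "real n - 1 = real k"
    using assms unfolding k_def by auto
  have "0 < hausdorff_const (real n - 1)"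
    using assms by (intro hausdorff_const_pos) auto
  have "\<tau> ^ k \<le> \<tau>"
    using power_decreasing[of 1 k \<tau>] \<open>1 \<le> k\<close> assms by simp
  have "M * (L * t + \<tau>) ^ k \<le> M * (2 ^ k * ((L * t) ^ k + \<tau> ^ k))"
    using assms by (intro mult_left_mono power_add_le_two_power) auto
  also have "\<dots> \<le> M * (2 ^ k * ((L * t) ^ k + \<tau>))"
    using \<open>\<tau> ^ k \<le> \<tau>\<close> assms by (intro mult_left_mono) auto
  also have "\<dots> = M * (2 ^ k * 2 ^ k) * L ^ k * (t / 2) ^ k + M * 2 ^ k * \<tau>"
    by (simp add: power_divide algebra_simps)
  also have "(2::real) ^ k * 2 ^ k = 4 ^ k"
    by (simp add: power_mult_distrib[symmetric])
  also have "(t / 2) ^ k = (t / 2) powr (real n - 1)"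
    using assms \<open>1 \<le> k\<close> unfolding k by (simp add: powr_realpow')
  finally show ?thesis
    unfolding k_def using \<open>0 < hausdorff_const (real n - 1)\<close> by simp
qed

lemma codim1_H_delta_le_sum_radii:
  fixes \<omega> :: "'a::euclidean_space \<Rightarrow> real" and X :: "nat \<Rightarrow> 'a set"
  assumes "0 < n" "0 \<le> M" "0 \<le> L"
    and dball: "\<And>x \<rho>. 0 < \<rho> \<Longrightarrow> wmu \<omega> (dball d x \<rho>) \<le> ennreal (M * \<rho> ^ n)"
    and lip: "\<And>y x. y \<in> B \<Longrightarrow> dist y x < r \<Longrightarrow> d y x \<le> L * dist y x"
    and cover: "B \<subseteq> (\<Union>i. X i)" and X: "\<And>i. bounded (X i)" "\<And>i. diameter (X i) < r"
    and \<tau>: "\<And>i. 0 < \<tau> i" "\<And>i. L * diameter (X i) + \<tau> i < \<delta>"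
  shows "codim1_H_delta \<omega> d \<delta> B \<le> (\<Sum>i. ennreal (M * (L * diameter (X i) + \<tau> i) ^ (n - 1)))"
proof -
  define I where "I = {i. X i \<inter> B \<noteq> {}}"
  define c where "c i = (SOME y. y \<in> X i \<inter> B)" for i
  define \<rho> where "\<rho> i = L * diameter (X i) + \<tau> i" for i
  have c: "c i \<in> X i \<inter> B" if "i \<in> I" for i
    using that unfolding I_def c_def by (metis (mono_tags, lifting) ex_in_conv mem_Collect_eq someI_ex)
  have \<rho>: "0 < \<rho> i" "\<rho> i < \<delta>" for i
  proof -
    have "0 \<le> L * diameter (X i)"
      using \<open>0 \<le> L\<close> diameter_ge_0[OF X(1)] by simp
    then show "0 < \<rho> i" "\<rho> i < \<delta>"
      unfolding \<rho>_def using \<tau>(1,2)[of i] by linarith+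
  qed
  have "B \<subseteq> (\<Union>i\<in>I. dball d (c i) (\<rho> i))"
  proof
    fix x assume "x \<in> B"
    then obtain i where "x \<in> X i" "i \<in> I"
      using cover unfolding I_def by blast
    then have "dist (c i) x \<le> diameter (X i)"
      using c X(1) by (intro diameter_bounded_bound) auto
    then have "L * dist (c i) x \<le> L * diameter (X i)"
      using \<open>0 \<le> L\<close> by (rule mult_left_mono)
    moreover have "d (c i) x \<le> L * dist (c i) x"
      using c[OF \<open>i \<in> I\<close>] X(2)[of i] \<open>dist (c i) x \<le> diameter (X i)\<close> by (intro lip) auto
    ultimately have "d (c i) x < \<rho> i"
      unfolding \<rho>_def using \<tau>(1)[of i] by linarith
    then show "x \<in> (\<Union>i\<in>I. dball d (c i) (\<rho> i))"
      using \<open>i \<in> I\<close> unfolding dball_def by auto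
  qed
  then have "codim1_H_delta \<omega> d \<delta> B
      \<le> (\<Sum>i. if i \<in> I then wmu \<omega> (dball d (c i) (\<rho> i)) / ennreal (\<rho> i) else 0)"
    unfolding codim1_H_delta_def using \<rho> by (intro INF_lower2[of "(I, c, \<rho>)"]) simp_all
  also have "\<dots> \<le> (\<Sum>i. ennreal (M * \<rho> i ^ (n - 1)))"
  proof (intro suminf_le)
    fix i
    have "wmu \<omega> (dball d (c i) (\<rho> i)) / ennreal (\<rho> i) \<le> ennreal (M * \<rho> i ^ n) / ennreal (\<rho> i)"
      using dball[OF \<rho>(1)] by (rule divide_right_mono_ennreal)
    also have "\<dots> = ennreal (M * \<rho> i ^ n / \<rho> i)"
      using \<open>0 \<le> M\<close> \<rho>(1)[of i] by (intro divide_ennreal) auto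
    also have "M * \<rho> i ^ n / \<rho> i = M * \<rho> i ^ (n - 1)"
      using \<rho>(1)[of i] \<open>0 < n\<close> by (cases n) auto
    finally show "(if i \<in> I then wmu \<omega> (dball d (c i) (\<rho> i)) / ennreal (\<rho> i) else 0)
        \<le> ennreal (M * \<rho> i ^ (n - 1))"
      by simp
  qed auto
  finally show ?thesis
    unfolding \<rho>_def .
qed

lemma euc_hausdorff_delta_cover_less:
  assumes "euc_hausdorff_delta s \<delta> B < \<infinity>" "0 < e"
  obtains X where "B \<subseteq> (\<Union>i. X i)" "\<And>i. bounded (X i)" "\<And>i. diameter (X i) < \<delta>"
    "(\<Sum>i. ennreal (hausdorff_const s * (diameter (X i) / 2) powr s)) < euc_hausdorff_delta s \<delta> B + ennreal e"
  using ennreal_INF_less_add[OF assms[unfolded euc_hausdorff_delta_def]] that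
  unfolding euc_hausdorff_delta_def by blast

\<comment> \<open>The extra radii \<open>\<tau> i = \<zeta> / 2\<^sup>i\<^sup>+\<^sup>1\<close> keep the \<open>d\<close>-balls nondegenerate when a covering set has diameter \<open>0\<close>.\<close>
lemma codim1_H_delta_le_euclidean_cover:
  fixes \<omega> :: "'a::euclidean_space \<Rightarrow> real" and X :: "nat \<Rightarrow> 'a set"
  assumes "2 \<le> n" "0 \<le> M" "0 < L"
    and dball: "\<And>x \<rho>. 0 < \<rho> \<Longrightarrow> wmu \<omega> (dball d x \<rho>) \<le> ennreal (M * \<rho> ^ n)"
    and lip: "\<And>y x. y \<in> B \<Longrightarrow> dist y x < r \<Longrightarrow> d y x \<le> L * dist y x"
    and X: "B \<subseteq> (\<Union>i. X i)" "\<And>i. bounded (X i)" "\<And>i. diameter (X i) < r" "\<And>i. L * diameter (X i) \<le> \<delta> / 2"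
    and "0 < \<zeta>" "\<zeta> \<le> 1" "\<zeta> \<le> \<delta> / 2"
  shows "codim1_H_delta \<omega> d \<delta> B
    \<le> ennreal (M * 4 ^ (n - 1) * L ^ (n - 1) / hausdorff_const (real n - 1))
        * (\<Sum>i. ennreal (hausdorff_const (real n - 1) * (diameter (X i) / 2) powr (real n - 1)))
      + ennreal (M * 2 ^ (n - 1) * \<zeta>)"
proof -
  define K where "K = M * 4 ^ (n - 1) * L ^ (n - 1) / hausdorff_const (real n - 1)"
  define M2 where "M2 = M * 2 ^ (n - 1)"
  let ?g = "\<lambda>X::'a set. hausdorff_const (real n - 1) * (diameter X / 2) powr (real n - 1)"
  have "0 < hausdorff_const (real n - 1)"
    using \<open>2 \<le> n\<close> by (intro hausdorff_const_pos) auto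
  then have "0 \<le> K" "0 \<le> M2"
    unfolding K_def M2_def using assms by auto
  define \<tau> where "\<tau> i = \<zeta> / 2 ^ Suc i" for i
  have \<tau>: "0 < \<tau> i" "\<tau> i \<le> 1" "\<tau> i < \<delta> / 2" for i
  proof -
    have "2 \<le> (2::real) ^ Suc i"
      using one_le_power[of "2::real" i] by simp
    then have "\<tau> i \<le> \<zeta> / 2"
      unfolding \<tau>_def using \<open>0 < \<zeta>\<close> by (intro divide_left_mono) auto
    moreover have "0 < \<tau> i"
      unfolding \<tau>_def using \<open>0 < \<zeta>\<close> by simp
    ultimately show "0 < \<tau> i" "\<tau> i \<le> 1" "\<tau> i < \<delta> / 2"
      using \<open>0 < \<zeta>\<close> \<open>\<zeta> \<le> 1\<close> \<open>\<zeta> \<le> \<delta> / 2\<close> by linarith+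
  qed
  have "L * diameter (X i) + \<tau> i < \<delta>" for i
    using X(4)[of i] \<tau>(3)[of i] by linarith
  then have "codim1_H_delta \<omega> d \<delta> B \<le> (\<Sum>i. ennreal (M * (L * diameter (X i) + \<tau> i) ^ (n - 1)))"
    using assms X \<tau>(1) by (intro codim1_H_delta_le_sum_radii[OF _ _ _ dball lip]) auto
  also have "\<dots> \<le> (\<Sum>i. ennreal K * ennreal (?g (X i)) + ennreal (M2 * \<tau> i))"
  proof (intro suminf_le)
    fix i
    have "M * (L * diameter (X i) + \<tau> i) ^ (n - 1) \<le> K * ?g (X i) + M2 * \<tau> i"
      unfolding K_def M2_def using assms \<tau>[of i] diameter_ge_0[OF X(2)]
      by (intro dball_cost_le) auto
    then show "ennreal (M * (L * diameter (X i) + \<tau> i) ^ (n - 1)) \<le> ennreal K * ennreal (?g (X i)) + ennreal (M2 * \<tau> i)"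
      using \<open>0 \<le> K\<close> \<open>0 \<le> M2\<close> \<tau>(1)[of i] \<open>0 < hausdorff_const (real n - 1)\<close>
      by (simp add: ennreal_mult[symmetric] ennreal_plus[symmetric] ennreal_leI del: ennreal_plus)
  qed auto
  also have "\<dots> = ennreal K * (\<Sum>i. ennreal (?g (X i))) + (\<Sum>i. ennreal (M2 * \<zeta> / 2 ^ Suc i))"
    unfolding \<tau>_def by (subst suminf_add[symmetric]) auto
  also have "(\<Sum>i. ennreal (M2 * \<zeta> / 2 ^ Suc i)) = ennreal (M2 * \<zeta>)"
    using \<open>0 \<le> M2\<close> \<open>0 < \<zeta>\<close> by (intro suminf_ennreal_half_powers) simp
  finally show ?thesis
    unfolding K_def M2_def .
qed

lemma codim1_H_delta_le_euc_hausdorff: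
  fixes \<omega> :: "'a::euclidean_space \<Rightarrow> real"
  assumes "2 \<le> n" "0 < M" "0 < L" "0 < r" "0 < \<delta>"
    and dball: "\<And>x \<rho>. 0 < \<rho> \<Longrightarrow> wmu \<omega> (dball d x \<rho>) \<le> ennreal (M * \<rho> ^ n)"
    and lip: "\<And>y x. y \<in> B \<Longrightarrow> dist y x < r \<Longrightarrow> d y x \<le> L * dist y x"
  shows "codim1_H_delta \<omega> d \<delta> B \<le> ennreal (M * 4 ^ (n - 1) * L ^ (n - 1) / hausdorff_const (real n - 1))
           * euc_hausdorff (real n - 1) B"
proof -
  define s where "s = real n - 1"
  define K where "K = M * 4 ^ (n - 1) * L ^ (n - 1) / hausdorff_const s"
  define M2 where "M2 = M * 2 ^ (n - 1)"
  have "0 < hausdorff_const s"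
    using \<open>2 \<le> n\<close> unfolding s_def by (intro hausdorff_const_pos) auto
  then have "0 < K" "0 < M2"
    unfolding K_def M2_def using assms by auto
  have "codim1_H_delta \<omega> d \<delta> B \<le> ennreal K * euc_hausdorff s B"
  proof (rule ennreal_le_epsilon)
    fix e :: real
    assume fin: "ennreal K * euc_hausdorff s B < top" and "0 < e"
    define \<eta> where "\<eta> = min r (\<delta> / (2 * L))"
    have "0 < \<eta>" "\<eta> \<le> r" "L * \<eta> \<le> \<delta> / 2"
      unfolding \<eta>_def using assms \<open>0 < \<delta>\<close> by (auto simp: min_def field_simps)
    have "euc_hausdorff_delta s \<eta> B \<le> euc_hausdorff s B"
      using \<open>0 < \<eta>\<close> by (rule euc_hausdorff_delta_le)
    moreover have "euc_hausdorff s B < \<infinity>"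
      using fin \<open>0 < K\<close> by (auto simp: ennreal_mult_less_top)
    ultimately have "euc_hausdorff_delta s \<eta> B < \<infinity>"
      by (rule le_less_trans)
    moreover have "0 < e / (2 * K)"
      using \<open>0 < e\<close> \<open>0 < K\<close> by simp
    ultimately obtain X where X: "B \<subseteq> (\<Union>i. X i)" "\<And>i. bounded (X i)" "\<And>i. diameter (X i) < \<eta>"
      and X_sum: "(\<Sum>i. ennreal (hausdorff_const s * (diameter (X i) / 2) powr s))
                    < euc_hausdorff_delta s \<eta> B + ennreal (e / (2 * K))"
      by (rule euc_hausdorff_delta_cover_less) blast
    define \<zeta> where "\<zeta> = min 1 (min (\<delta> / 2) (e / (2 * M2)))"
    have "0 < \<zeta>" "\<zeta> \<le> 1" "\<zeta> \<le> \<delta> / 2" "\<zeta> \<le> e / (2 * M2)"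
      unfolding \<zeta>_def using \<open>0 < \<delta>\<close> \<open>0 < e\<close> \<open>0 < M2\<close> by auto
    have "M2 * \<zeta> \<le> M2 * (e / (2 * M2))"
      using \<open>\<zeta> \<le> e / (2 * M2)\<close> \<open>0 < M2\<close> by (intro mult_left_mono) auto
    then have "M2 * \<zeta> \<le> e / 2"
      using \<open>0 < M2\<close> by simp
    have "L * diameter (X i) \<le> \<delta> / 2" "diameter (X i) < r" for i
      using mult_left_mono[OF less_imp_le[OF X(3)], of L i] \<open>0 < L\<close> \<open>L * \<eta> \<le> \<delta> / 2\<close> X(3)[of i] \<open>\<eta> \<le> r\<close>
      by linarith+
    then have "codim1_H_delta \<omega> d \<delta> B
        \<le> ennreal K * (\<Sum>i. ennreal (hausdorff_const s * (diameter (X i) / 2) powr s)) + ennreal (M2 * \<zeta>)"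
      unfolding K_def M2_def s_def using assms X(1,2) \<open>0 < \<zeta>\<close> \<open>\<zeta> \<le> 1\<close> \<open>\<zeta> \<le> \<delta> / 2\<close>
      by (intro codim1_H_delta_le_euclidean_cover[OF _ _ _ dball lip]) auto
    also have "\<dots> \<le> ennreal K * (euc_hausdorff s B + ennreal (e / (2 * K))) + ennreal (e / 2)"
      using X_sum \<open>euc_hausdorff_delta s \<eta> B \<le> euc_hausdorff s B\<close> \<open>M2 * \<zeta> \<le> e / 2\<close>
      by (intro add_mono mult_left_mono ennreal_leI) (auto intro: order_trans less_imp_le add_right_mono)
    also have "\<dots> = ennreal K * euc_hausdorff s B + ennreal e"
      using \<open>0 < K\<close> \<open>0 < e\<close>
      by (simp add: distrib_left ennreal_mult[symmetric] ennreal_plus[symmetric] add.assoc del: ennreal_plus)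
    finally show "codim1_H_delta \<omega> d \<delta> B \<le> ennreal K * euc_hausdorff s B + ennreal e" .
  qed
  then show ?thesis
    unfolding K_def s_def .
qed

lemma codim1_H_le_euc_hausdorff:
  fixes \<omega> :: "'a::euclidean_space \<Rightarrow> real"
  assumes "2 \<le> n" "0 < M" "0 < L" "0 < r"
    and dball: "\<And>x \<rho>. 0 < \<rho> \<Longrightarrow> wmu \<omega> (dball d x \<rho>) \<le> ennreal (M * \<rho> ^ n)"
    and lip: "\<And>y x. y \<in> B \<Longrightarrow> dist y x < r \<Longrightarrow> d y x \<le> L * dist y x"
  shows "codim1_H \<omega> d B \<le> ennreal (M * 4 ^ (n - 1) * L ^ (n - 1) / hausdorff_const (real n - 1))
           * euc_hausdorff (real n - 1) B"
  unfolding codim1_H_def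
proof (rule SUP_least)
  fix \<delta> :: real assume "\<delta> \<in> {0<..}"
  then show "codim1_H_delta \<omega> d \<delta> B \<le> ennreal (M * 4 ^ (n - 1) * L ^ (n - 1) / hausdorff_const (real n - 1))
      * euc_hausdorff (real n - 1) B"
    using assms(1-4) by (intro codim1_H_delta_le_euc_hausdorff[OF _ _ _ _ _ dball lip]) auto
qed

lemma Limsup_less_subset_Union_density_below:
  fixes \<omega> :: "'a::euclidean_space \<Rightarrow> real"
  assumes "\<forall>x\<in>A. Limsup (at_right 0) (\<lambda>r. wmu \<omega> (ball x r) / ennreal (r ^ DIM('a))) < ennreal \<epsilon>" "0 < \<epsilon>"
  shows "A \<subseteq> (\<Union>m. density_below \<omega> \<epsilon> (1 / (real m + 1)))"
proof
  fix x assume "x \<in> A"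
  then obtain \<rho> where "0 < \<rho>" "x \<in> density_below \<omega> \<epsilon> \<rho>"
    using assms Limsup_less_imp_density_below by metis
  obtain m :: nat where "1 / (real m + 1) < \<rho>"
    using reals_Archimedean[OF \<open>0 < \<rho>\<close>] by (auto simp: inverse_eq_divide add.commute)
  then have "density_below \<omega> \<epsilon> \<rho> \<subseteq> density_below \<omega> \<epsilon> (1 / (real m + 1))"
    by (intro density_below_antimono) simp
  with \<open>x \<in> density_below \<omega> \<epsilon> \<rho>\<close> show "x \<in> (\<Union>m. density_below \<omega> \<epsilon> (1 / (real m + 1)))"
    by blast
qed

lemma codim1_H_le_density_below:
  fixes \<omega> :: "'a::euclidean_space \<Rightarrow> real"
  assumes dim: "2 \<le> DIM('a)" and w: "strong_Ainf_with \<omega> d"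
  obtains K where "0 < K"
    "\<And>\<epsilon> \<rho> D. 0 < \<epsilon> \<Longrightarrow> 0 < \<rho> \<Longrightarrow> D \<subseteq> density_below \<omega> \<epsilon> \<rho> \<Longrightarrow>
       codim1_H \<omega> d D
         \<le> ennreal K * ennreal (\<epsilon> powr ((real DIM('a) - 1) / real DIM('a))) * euc_hausdorff (real DIM('a) - 1) D"
proof -
  define n where "n = DIM('a)"
  obtain M where "0 < M" and dball: "\<And>x \<rho>. 0 < \<rho> \<Longrightarrow> wmu \<omega> (dball d x \<rho>) \<le> ennreal (M * \<rho> ^ n)"
    unfolding n_def using strong_Ainf_with_dball_le[OF w] by blast
  obtain C where "1 \<le> C" and C: "\<forall>x y. enn2real (wmu \<omega> (Bxy x y)) powr (1 / real n) / C \<le> d x y \<and>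
                    d x y \<le> C * enn2real (wmu \<omega> (Bxy x y)) powr (1 / real n)"
    unfolding n_def using strong_Ainf_with_comparison[OF w] by blast
  then have upper: "\<And>x y. d x y \<le> C * enn2real (wmu \<omega> (Bxy x y)) powr (1 / real n)"
    by blast
  define K where "K = M * 4 ^ (n - 1) * (2 * C) ^ (n - 1) / hausdorff_const (real n - 1)"
  have "0 < K"
    unfolding K_def using \<open>0 < M\<close> \<open>1 \<le> C\<close> dim by (auto simp: n_def intro!: divide_pos_pos hausdorff_const_pos)
  moreover have "codim1_H \<omega> d D \<le> ennreal K * ennreal (\<epsilon> powr ((real n - 1) / real n)) * euc_hausdorff (real n - 1) D"
    if "0 < \<epsilon>" "0 < \<rho>" and D: "D \<subseteq> density_below \<omega> \<epsilon> \<rho>" for \<epsilon> \<rho> D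
  proof -
    define L where "L = 2 * C * \<epsilon> powr (1 / real n)"
    have "0 < L"
      unfolding L_def using \<open>1 \<le> C\<close> \<open>0 < \<epsilon>\<close> by simp
    have lip: "d y x \<le> L * dist y x" if "y \<in> D" "dist y x < \<rho> / 2" for y x
      unfolding L_def using \<open>1 \<le> C\<close> \<open>0 < \<epsilon>\<close> that D strong_Ainf_with_dist_self[OF w]
      by (intro d_le_dist_of_uniform_density[OF upper, where R = \<rho>])
        (auto simp: n_def density_below_def)
    have "L ^ (n - 1) = (2 * C) ^ (n - 1) * \<epsilon> powr ((real n - 1) / real n)"
      unfolding L_def power_mult_distrib using \<open>0 < \<epsilon>\<close> dim
      by (simp add: powr_realpow[symmetric] powr_powr n_def)
    then have "M * 4 ^ (n - 1) * L ^ (n - 1) / hausdorff_const (real n - 1)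
        = K * \<epsilon> powr ((real n - 1) / real n)"
      unfolding K_def by simp
    moreover have "codim1_H \<omega> d D \<le> ennreal (M * 4 ^ (n - 1) * L ^ (n - 1) / hausdorff_const (real n - 1))
        * euc_hausdorff (real n - 1) D"
      by (rule codim1_H_le_euc_hausdorff[of n M L "\<rho> / 2"])
        (use dim \<open>0 < M\<close> \<open>0 < L\<close> \<open>0 < \<rho>\<close> dball lip in \<open>auto simp: n_def\<close>)
    ultimately show ?thesis
      using \<open>0 < K\<close> by (simp add: ennreal_mult)
  qed
  ultimately show ?thesis
    using that unfolding n_def by blast
qed

lemma Union_layers_cover:
  assumes "S 0 = {}" "A \<subseteq> (\<Union>m. S m)"
  shows "A \<subseteq> (\<Union>m. A \<inter> S (Suc m) - S m)"
proof
  fix x assume "x \<in> A"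
  then obtain m where "x \<in> S m"
    using assms(2) by blast
  define N where "N = (LEAST N. x \<in> S N)"
  have "x \<in> S N"
    unfolding N_def using \<open>x \<in> S m\<close> by (rule LeastI)
  then obtain k where k: "N = Suc k"
    using assms(1) by (cases N) auto
  then have "x \<notin> S k"
    unfolding N_def using not_less_Least[of k "\<lambda>N. x \<in> S N"] by auto
  then show "x \<in> (\<Union>m. A \<inter> S (Suc m) - S m)"
    using \<open>x \<in> A\<close> \<open>x \<in> S N\<close> k by blast
qed

lemma codim1_H_le_of_Limsup_less:
  fixes \<omega> :: "'a::euclidean_space \<Rightarrow> real"
  assumes dim: "2 \<le> DIM('a)" and w: "strong_Ainf_with \<omega> d"
  obtains K where "0 < K"
    "\<And>\<epsilon> A. 0 < \<epsilon> \<Longrightarrow>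
       (\<forall>x\<in>A. Limsup (at_right 0) (\<lambda>r. wmu \<omega> (ball x r) / ennreal (r ^ DIM('a))) < ennreal \<epsilon>) \<Longrightarrow>
       codim1_H \<omega> d A
         \<le> ennreal K * ennreal (\<epsilon> powr ((real DIM('a) - 1) / real DIM('a))) * euc_hausdorff (real DIM('a) - 1) A"
proof -
  let ?s = "real DIM('a) - 1"
  obtain K where "0 < K" and K: "\<And>\<epsilon> \<rho> D. 0 < \<epsilon> \<Longrightarrow> 0 < \<rho> \<Longrightarrow> D \<subseteq> density_below \<omega> \<epsilon> \<rho> \<Longrightarrow>
       codim1_H \<omega> d D \<le> ennreal K * ennreal (\<epsilon> powr (?s / real DIM('a))) * euc_hausdorff ?s D"
    using codim1_H_le_density_below[OF dim w] by blast
  moreover have "codim1_H \<omega> d A \<le> ennreal K * ennreal (\<epsilon> powr (?s / real DIM('a))) * euc_hausdorff ?s A"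
    if "0 < \<epsilon>" and Limsup: "\<forall>x\<in>A. Limsup (at_right 0) (\<lambda>r. wmu \<omega> (ball x r) / ennreal (r ^ DIM('a))) < ennreal \<epsilon>"
    for \<epsilon> A
  proof -
    let ?K = "ennreal K * ennreal (\<epsilon> powr (?s / real DIM('a)))"
    \<comment> \<open>Layer \<open>A\<close> by the scale below which the density bound holds.\<close>
    define S where "S m = (case m of 0 \<Rightarrow> {} | Suc k \<Rightarrow> density_below \<omega> \<epsilon> (1 / (real k + 1)))" for m
    define D where "D m = A \<inter> S (Suc m) - S m" for m
    have "closed (S m)" for m
      unfolding S_def by (cases m) (auto intro: closed_density_below)
    have "incseq S"
      unfolding S_def
      by (intro incseq_SucI) (auto split: nat.split intro!: density_below_antimono frac_le)
    have "A \<subseteq> (\<Union>m. S (Suc m))"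
      unfolding S_def using Limsup_less_subset_Union_density_below[OF Limsup \<open>0 < \<epsilon>\<close>] by simp
    then have "A \<subseteq> (\<Union>m. S m)"
      by auto
    then have "A \<subseteq> (\<Union>m. D m)"
      unfolding D_def by (rule Union_layers_cover[rotated]) (simp add: S_def)
    then have "codim1_H \<omega> d A \<le> (\<Sum>m. codim1_H \<omega> d (D m))"
      by (rule order_trans[OF codim1_H_mono codim1_H_countably_subadditive])
    also have "\<dots> \<le> (\<Sum>m. ?K * euc_hausdorff ?s (D m))"
      using \<open>0 < \<epsilon>\<close> by (intro suminf_le K[of _ "1 / (real m + 1)" for m]) (auto simp: D_def S_def)
    also have "\<dots> = ?K * (\<Sum>m. euc_hausdorff ?s (D m))"
      by simp
    also have "\<dots> \<le> ?K * euc_hausdorff ?s A"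
      unfolding D_def using \<open>\<And>m. closed (S m)\<close> \<open>incseq S\<close>
      by (intro mult_left_mono euc_hausdorff.suminf_layers_le) auto
    finally show ?thesis .
  qed
  ultimately show ?thesis
    using that by blast
qed

lemma ennreal_eq_0_if_le_powr_mult:
  fixes x y :: ennreal
  assumes "0 < p" "y < \<infinity>" and le: "\<And>\<epsilon>. 0 < \<epsilon> \<Longrightarrow> x \<le> ennreal (\<epsilon> powr p) * y"
  shows "x = 0"
proof -
  obtain q where q: "y = ennreal q" "0 \<le> q"
    using \<open>y < \<infinity>\<close> by (cases y rule: ennreal_cases) auto
  have bound: "x \<le> 0 + ennreal e" if "0 < e" for e
  proof -
    define \<epsilon> where "\<epsilon> = (e / (q + 1)) powr (1 / p)"
    have "0 < \<epsilon>"
      unfolding \<epsilon>_def using \<open>0 < e\<close> q(2) by simp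
    have "\<epsilon> powr p = e / (q + 1)"
      unfolding \<epsilon>_def using \<open>0 < p\<close> \<open>0 < e\<close> q(2) by (simp add: powr_powr)
    have "e / (q + 1) * q \<le> e / (q + 1) * (q + 1)"
      using \<open>0 < e\<close> q(2) by (intro mult_left_mono) auto
    then have real_bound: "e / (q + 1) * q \<le> e"
      using q(2) by simp
    have "x \<le> ennreal (e / (q + 1)) * ennreal q"
      using le[OF \<open>0 < \<epsilon>\<close>] \<open>\<epsilon> powr p = e / (q + 1)\<close> unfolding q(1) by simp
    also have "\<dots> = ennreal (e / (q + 1) * q)"
      by (rule ennreal_mult[symmetric]) (use \<open>0 < e\<close> q(2) in auto)
    also have "\<dots> \<le> ennreal e"
      using real_bound by (rule ennreal_leI)
    finally show ?thesis
      by simp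
  qed
  have "x \<le> 0"
    by (rule ennreal_le_epsilon, rule bound)
  then show ?thesis
    by simp
qed

theorem lemma7p4:
  fixes \<omega> :: "'a::euclidean_space \<Rightarrow> real" and d :: "'a \<Rightarrow> 'a \<Rightarrow> real"
    and K :: real and \<Omega> E :: "'a set"
  assumes dim: "DIM('a) \<ge> 2"
    and weight: "strong_Ainf_with \<omega> d"
    and Omega: "open \<Omega>"
    and EOmega: "E \<subseteq> \<Omega>"
    and K: "1 \<le> K"
    and qmin: "quasiminimal \<omega> d K \<Omega> E"
    and finper: "perimeter \<omega> d E \<Omega> < \<infinity>"
    and norm1: "E = interior (closure E)"
    and norm2: "\<And>x r. x \<in> frontier E \<Longrightarrow> 0 < r \<Longrightarrow>
                  wmu \<omega> (ball x r \<inter> E) > 0 \<and> wmu \<omega> (ball x r - E) > 0"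
  shows "(codim1_H \<omega> d {x \<in> \<Omega> \<inter> frontier E.
              Limsup (at_right 0) (\<lambda>r. wmu \<omega> (ball x r) / ennreal (r ^ DIM('a))) = 0} = 0
         \<or> euc_hausdorff (real DIM('a) - 1) {x \<in> \<Omega> \<inter> frontier E.
              Limsup (at_right 0) (\<lambda>r. wmu \<omega> (ball x r) / ennreal (r ^ DIM('a))) = 0} = \<infinity>)
    \<and> (\<exists>C>0. \<forall>\<epsilon>>0.
           codim1_H \<omega> d {x \<in> \<Omega> \<inter> frontier E.
              Limsup (at_right 0) (\<lambda>r. wmu \<omega> (ball x r) / ennreal (r ^ DIM('a))) < ennreal \<epsilon>}
         \<le> ennreal C * ennreal (\<epsilon> powr ((real DIM('a) - 1) / real DIM('a)))
            * euc_hausdorff (real DIM('a) - 1) {x \<in> \<Omega> \<inter> frontier E.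
              Limsup (at_right 0) (\<lambda>r. wmu \<omega> (ball x r) / ennreal (r ^ DIM('a))) < ennreal \<epsilon>})"
proof -
  let ?s = "real DIM('a) - 1"
  let ?p = "?s / real DIM('a)"
  let ?Lim = "\<lambda>x. Limsup (at_right 0) (\<lambda>r. wmu \<omega> (ball x r) / ennreal (r ^ DIM('a)))"
  let ?F0 = "{x \<in> \<Omega> \<inter> frontier E. ?Lim x = 0}"
  obtain C where "0 < C" and C: "\<And>\<epsilon> A. 0 < \<epsilon> \<Longrightarrow> (\<forall>x\<in>A. ?Lim x < ennreal \<epsilon>) \<Longrightarrow>
      codim1_H \<omega> d A \<le> ennreal C * ennreal (\<epsilon> powr ?p) * euc_hausdorff ?s A"
    using codim1_H_le_of_Limsup_less[OF dim weight] by blast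
  have F0: "codim1_H \<omega> d ?F0 = 0" if "euc_hausdorff ?s ?F0 \<noteq> \<infinity>"
  proof (rule ennreal_eq_0_if_le_powr_mult)
    show "0 < ?p"
      using dim by simp
    show "ennreal C * euc_hausdorff ?s ?F0 < \<infinity>"
      using that by (simp add: ennreal_mult_less_top top.not_eq_extremum)
    fix \<epsilon> :: real assume "0 < \<epsilon>"
    then show "codim1_H \<omega> d ?F0 \<le> ennreal (\<epsilon> powr ?p) * (ennreal C * euc_hausdorff ?s ?F0)"
      using C[of \<epsilon> ?F0] by (simp add: mult_ac)
  qed
  have "codim1_H \<omega> d {x \<in> \<Omega> \<inter> frontier E. ?Lim x < ennreal \<epsilon>}
      \<le> ennreal C * ennreal (\<epsilon> powr ?p) * euc_hausdorff ?s {x \<in> \<Omega> \<inter> frontier E. ?Lim x < ennreal \<epsilon>}"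
    if "0 < \<epsilon>" for \<epsilon>
    using that by (intro C) auto
  then show ?thesis
    using F0 \<open>0 < C\<close> by blast
qed

end
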